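(* There is a constant $c$ such that for every $n\ge 1$ and every $\epsilon>0$ there is a quantum algorithm that $\epsilon$-tests the orthogonal group $\mathbb{O}_N$ (with $N=2^n$) using at most $c/\epsilon^2$ queries to $U$; i.e. the query complexity is $O(1/\epsilon^2)$, independent of $N$.
   Context: Let $n\ge1$, $N=2^n$, $\mathbb{M}_{N,N}$ the complex $N\times N$ matrices and $\mathbb{U}_N$ the unitary ones. $\|A\|=\sqrt{\mathrm{tr}(A^\dagger A)}$; $D(A,B)=\min_{\theta\in[0,2\pi)}\frac{1}{\sqrt{2N}}\|e^{i\theta}A-B\|$; $D(A,\mathcal{S})=\inf_{B\in\mathcal{S}}D(A,B)$. For $\mathcal{S}\subseteq\mathbb{U}_N$, $U\in\mathbb{U}_N$ has property $\mathcal{S}$ if $U=e^{i\theta}V$ for some $V\in\mathcal{S}$ and real $\theta$, and $U$ is $\epsilon$-far from $\mathcal{S}$ if $D(U,V)\ge\epsilon$ for all $V\in\mathcal{S}$. Testing model: an unknown $U\in\mathbb{U}_N$ is given as a black box; an algorithm may prepare arbitrary states on the $N$-dimensional system together with an ancilla, apply $U\otimes I$ (one query each time) interleaved with arbitrary fixed quantum operations, and measure. An algorithm $\epsilon$-tests $\mathcal{S}$ if for every $U\in\mathbb{U}_N$ it accepts with probability at least $2/3$ whenever $U$ has property $\mathcal{S}$ and with probability at most $1/3$ whenever $U$ is $\epsilon$-far from $\mathcal{S}$; its query complexity is the number of queries made. $\mathbb{O}_N=\{U\in\mathbb{U}_N: UU^T=U^TU=I\}$. *)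

theory Defs
  imports Complex_Main "Jordan_Normal_Form.Matrix"
begin

definition adj :: "complex mat \<Rightarrow> complex mat" where
  "adj A = mat (dim_col A) (dim_row A) (\<lambda>(i,j). cnj (A $$ (j,i)))"

definition unitary_mat :: "nat \<Rightarrow> complex mat \<Rightarrow> bool" where
  "unitary_mat N U \<longleftrightarrow> U \<in> carrier_mat N N \<and> U * adj U = 1\<^sub>m N \<and> adj U * U = 1\<^sub>m N"

definition orth_group :: "nat \<Rightarrow> complex mat set" where
  "orth_group N = {U. unitary_mat N U \<and> U * transpose_mat U = 1\<^sub>m N \<and> transpose_mat U * U = 1\<^sub>m N}"

definition fnorm :: "complex mat \<Rightarrow> real" where
  "fnorm A = sqrt (\<Sum>i<dim_row A. \<Sum>j<dim_col A. (cmod (A $$ (i,j)))\<^sup>2)"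

definition Dist :: "nat \<Rightarrow> complex mat \<Rightarrow> complex mat \<Rightarrow> real" where
  "Dist N A B = (INF \<theta>\<in>{0..<2*pi}. fnorm (exp (\<i> * complex_of_real \<theta>) \<cdot>\<^sub>m A - B) / sqrt (2 * real N))"

definition has_property :: "nat \<Rightarrow> complex mat set \<Rightarrow> complex mat \<Rightarrow> bool" where
  "has_property N S U \<longleftrightarrow> (\<exists>V\<in>S. \<exists>\<theta>::real. U = exp (\<i> * complex_of_real \<theta>) \<cdot>\<^sub>m V)"

definition eps_far :: "nat \<Rightarrow> real \<Rightarrow> complex mat set \<Rightarrow> complex mat \<Rightarrow> bool" where
  "eps_far N \<epsilon> S U \<longleftrightarrow> (\<forall>V\<in>S. Dist N U V \<ge> \<epsilon>)"

text \<open>Kronecker product A (x) B (index (i,k) of A(x)B is i * dim B + k).\<close>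
definition kron :: "complex mat \<Rightarrow> complex mat \<Rightarrow> complex mat" where
  "kron A B = mat (dim_row A * dim_row B) (dim_col A * dim_col B)
     (\<lambda>(i,j). A $$ (i div dim_row B, j div dim_col B) * B $$ (i mod dim_row B, j mod dim_col B))"

definition vnorm2 :: "complex vec \<Rightarrow> real" where
  "vnorm2 v = (\<Sum>i<dim_vec v. (cmod (v $ i))\<^sup>2)"

text \<open>A query algorithm (in purified form): number of queries q, ancilla dimension M,
  initial pure state psi0 on C^N (x) C^M, fixed unitaries V_0..V_q on C^N (x) C^M
  interleaved with the q queries U (x) I_M, and a final two-outcome projective measurement
  whose "accept" projector is P.\<close>
record qalg =
  nqueries :: nat
  anc_dim :: nat
  init_state :: "complex vec"
  ops :: "nat \<Rightarrow> complex mat"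
  acc_proj :: "complex mat"

definition valid_qalg :: "nat \<Rightarrow> qalg \<Rightarrow> bool" where
  "valid_qalg N A \<longleftrightarrow>
     anc_dim A \<ge> 1 \<and>
     init_state A \<in> carrier_vec (N * anc_dim A) \<and> vnorm2 (init_state A) = 1 \<and>
     (\<forall>k\<le>nqueries A. unitary_mat (N * anc_dim A) (ops A k)) \<and>
     acc_proj A \<in> carrier_mat (N * anc_dim A) (N * anc_dim A) \<and>
     acc_proj A * acc_proj A = acc_proj A \<and> adj (acc_proj A) = acc_proj A"

fun run_state :: "qalg \<Rightarrow> complex mat \<Rightarrow> nat \<Rightarrow> complex vec" where
  "run_state A U 0 = ops A 0 *\<^sub>v init_state A"
| "run_state A U (Suc k) = ops A (Suc k) *\<^sub>v (kron U (1\<^sub>m (anc_dim A)) *\<^sub>v run_state A U k)"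

definition accept_prob :: "qalg \<Rightarrow> complex mat \<Rightarrow> real" where
  "accept_prob A U = vnorm2 (acc_proj A *\<^sub>v run_state A U (nqueries A))"

definition eps_tests :: "nat \<Rightarrow> real \<Rightarrow> complex mat set \<Rightarrow> qalg \<Rightarrow> bool" where
  "eps_tests N \<epsilon> S A \<longleftrightarrow> valid_qalg N A \<and>
     (\<forall>U. unitary_mat N U \<longrightarrow>
        (has_property N S U \<longrightarrow> accept_prob A U \<ge> 2/3) \<and>
        (eps_far N \<epsilon> S U \<longrightarrow> accept_prob A U \<le> 1/3))"

end

theory Submission
  imports Defs "HOL-Analysis.Analysis" "Jordan_Normal_Form.Determinant"
begin

(* The tester prepares k ~ 1/epsilon^2 maximally entangled states Phi on C^N (x) C^N.  Two queries
   to the first half of a copy, with a swap of the halves in between, turn it into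
   SWAP (U (x) U) Phi, whose overlap with Phi is tr (U U^T) / N; projecting all copies back onto Phi
   accepts with probability |tr (U U^T) / N|^(2k).  For U a phase times an orthogonal matrix this
   is 1.  If U is epsilon-far from O_N, rotate it by a phase making tr (U U^T) real and nonnegative
   and write it as A + iB with A, B real; unitarity gives A^T A + B^T B = 1, and the orthogonal
   factor V of the polar decomposition of A satisfies |A - V|^2 <= |B|^2.  Hence
   2 N epsilon^2 <= |U - V|^2 <= 2 |B|^2 = N - |tr (U U^T)|, and the acceptance probability is at
   most (1 - 2 epsilon^2)^(2k) <= exp (-4) < 1/3. *)

section \<open>Traces and real orthogonal matrices\<close>

definition mtrace :: "'a::comm_ring_1 mat \<Rightarrow> 'a" where
  "mtrace A = (\<Sum>i<dim_row A. A $$ (i,i))"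

lemma mtrace_mult_comm:
  assumes "M \<in> carrier_mat n m" "K \<in> carrier_mat m n"
  shows "mtrace (M * K) = mtrace (K * M)"
proof -
  have "mtrace (M * K) = (\<Sum>i<n. \<Sum>k<m. M $$ (i,k) * K $$ (k,i))"
    using assms unfolding mtrace_def by (intro sum.cong) (auto simp: scalar_prod_def atLeast0LessThan)
  also have "\<dots> = (\<Sum>k<m. \<Sum>i<n. K $$ (k,i) * M $$ (i,k))"
    by (subst sum.swap) (simp add: mult.commute)
  also have "\<dots> = mtrace (K * M)"
    using assms unfolding mtrace_def by (intro sum.cong) (auto simp: scalar_prod_def atLeast0LessThan)
  finally show ?thesis .
qed

lemma mtrace_add: "M \<in> carrier_mat n n \<Longrightarrow> K \<in> carrier_mat n n \<Longrightarrow> mtrace (M + K) = mtrace M + mtrace K"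
  unfolding mtrace_def by (simp add: sum.distrib)

lemma mtrace_minus: "M \<in> carrier_mat n n \<Longrightarrow> K \<in> carrier_mat n n \<Longrightarrow> mtrace (M - K) = mtrace M - mtrace K"
  unfolding mtrace_def by (simp add: sum_subtractf)

lemma mtrace_one [simp]: "mtrace (1\<^sub>m n) = of_nat n"
  unfolding mtrace_def by simp

lemma transpose_mult_index:
  assumes "W \<in> carrier_mat n m" "A \<in> carrier_mat n k" "i < m" "j < k"
  shows "(transpose_mat W * A) $$ (i,j) = (\<Sum>a<n. W $$ (a,i) * A $$ (a,j))"
  using assms by (auto simp: scalar_prod_def atLeast0LessThan)

lemma mtrace_transpose_mult:
  assumes "W \<in> carrier_mat n m" "A \<in> carrier_mat n m"
  shows "mtrace (transpose_mat W * A) = (\<Sum>i<m. \<Sum>a<n. W $$ (a,i) * A $$ (a,i))"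
  unfolding mtrace_def using assms by (intro sum.cong) (auto simp: scalar_prod_def atLeast0LessThan)

definition frobenius_sq :: "real mat \<Rightarrow> real" where
  "frobenius_sq M = (\<Sum>i<dim_row M. \<Sum>j<dim_col M. (M $$ (i,j))\<^sup>2)"

lemma frobenius_sq_mtrace:
  assumes "M \<in> carrier_mat n m"
  shows "frobenius_sq M = mtrace (transpose_mat M * M)"
  using assms unfolding mtrace_transpose_mult[OF assms assms] frobenius_sq_def
  by (subst sum.swap) (simp add: power2_eq_square)

definition real_orthogonal :: "nat \<Rightarrow> real mat \<Rightarrow> bool" where
  "real_orthogonal N V \<longleftrightarrow> V \<in> carrier_mat N N \<and> transpose_mat V * V = 1\<^sub>m N"

lemma real_orthogonal_mult_transpose:
  "real_orthogonal N V \<Longrightarrow> V * transpose_mat V = 1\<^sub>m N"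
  using mat_mult_left_right_inverse[of "transpose_mat V" N V] unfolding real_orthogonal_def by auto

lemma real_orthogonal_mult:
  assumes V: "real_orthogonal N V" and H: "real_orthogonal N H"
  shows "real_orthogonal N (V * H)"
proof -
  have c: "V \<in> carrier_mat N N" "H \<in> carrier_mat N N" using V H unfolding real_orthogonal_def by auto
  have "transpose_mat (V * H) * (V * H) = transpose_mat H * ((transpose_mat V * V) * H)"
    using c by (simp add: transpose_mult assoc_mult_mat[of _ N N _ N _ N])
  also have "\<dots> = 1\<^sub>m N" using V H c unfolding real_orthogonal_def by simp
  finally show ?thesis using c unfolding real_orthogonal_def by simp
qed

text \<open>Orthogonal matrices, read as functions on index pairs, form a compact set; hence the
  linear functional \<open>W \<mapsto> tr(W\<^sup>T A)\<close> attains its maximum on them.\<close>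

lemma compact_orthonormal_columns:
  "compact {g :: nat \<times> nat \<Rightarrow> real. (\<forall>p. \<not> (fst p < N \<and> snd p < N) \<longrightarrow> g p = 0) \<and>
     (\<forall>i j. i < N \<and> j < N \<longrightarrow> (\<Sum>a<N. g (a,i) * g (a,j)) = (if i = j then 1 else 0))}"
    (is "compact ?F")
proof -
  define Box where "Box = PiE UNIV (\<lambda>p::nat\<times>nat. if fst p < N \<and> snd p < N then {-1..1} else {0::real})"
  have "compactin (product_topology (\<lambda>_. euclidean) UNIV) Box"
    unfolding Box_def by (subst compactin_PiE) auto
  then have "compact Box" by (simp add: euclidean_product_topology compactin_euclidean_iff)
  moreover have "closed ?F"
    by (intro closed_Collect_conj closed_Collect_all closed_Collect_imp open_Collect_const
          closed_Collect_eq continuous_intros) auto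
  moreover have "?F \<subseteq> Box"
  proof
    fix g assume g: "g \<in> ?F"
    have "g (a,i) \<in> {-1..1}" if "a < N" "i < N" for a i
    proof -
      have "(g (a,i))\<^sup>2 \<le> (\<Sum>b<N. g (b,i) * g (b,i))"
        using that by (subst power2_eq_square, intro member_le_sum) auto
      also have "\<dots> = 1" using g that by auto
      finally show ?thesis by (simp add: abs_square_le_1 abs_le_iff)
    qed
    then show "g \<in> Box" using g unfolding Box_def by (auto intro!: PiE_I)
  qed
  ultimately show ?thesis using compact_Int_closed[of Box ?F] by (simp add: Int_absorb1)
qed

lemma real_orthogonal_trace_maximizer:
  assumes A: "A \<in> carrier_mat N N"
  obtains V where "real_orthogonal N V"
    "\<And>W. real_orthogonal N W \<Longrightarrow> mtrace (transpose_mat W * A) \<le> mtrace (transpose_mat V * A)"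
proof -
  define F where "F = {g :: nat \<times> nat \<Rightarrow> real. (\<forall>p. \<not> (fst p < N \<and> snd p < N) \<longrightarrow> g p = 0) \<and>
     (\<forall>i j. i < N \<and> j < N \<longrightarrow> (\<Sum>a<N. g (a,i) * g (a,j)) = (if i = j then 1 else 0))}"
  define obj where "obj g = (\<Sum>i<N. \<Sum>a<N. g (a,i) * A $$ (a,i))" for g :: "nat \<times> nat \<Rightarrow> real"
  define entries where "entries W = (\<lambda>(i,j). if i < N \<and> j < N then W $$ (i,j) else (0::real))" for W
  have entries: "entries W \<in> F" "obj (entries W) = mtrace (transpose_mat W * A)"
    if W: "real_orthogonal N W" for W
  proof -
    have "(\<Sum>a<N. W $$ (a,i) * W $$ (a,j)) = (if i = j then 1 else 0)" if "i < N" "j < N" for i j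
      using W that transpose_mult_index[of W N N W N i j] unfolding real_orthogonal_def by simp
    then show "entries W \<in> F" unfolding F_def entries_def by auto
    show "obj (entries W) = mtrace (transpose_mat W * A)"
      using W A unfolding obj_def entries_def real_orthogonal_def
      by (simp add: mtrace_transpose_mult[of W N N A])
  qed
  have "F \<noteq> {}" using entries(1)[of "1\<^sub>m N"] by (auto simp: real_orthogonal_def)
  moreover have "continuous_on F obj"
    unfolding obj_def by (intro continuous_intros continuous_on_subset[OF continuous_on_product_coordinates]) auto
  ultimately obtain g where g: "g \<in> F" and gmax: "\<And>h. h \<in> F \<Longrightarrow> obj h \<le> obj g"
    using continuous_attains_sup[OF compact_orthonormal_columns[of N, folded F_def]] by blast
  define V where "V = Matrix.mat N N g"
  have "transpose_mat V * V = 1\<^sub>m N"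
  proof (rule eq_matI)
    fix i j assume "i < dim_row (1\<^sub>m N)" "j < dim_col (1\<^sub>m N)"
    then show "(transpose_mat V * V) $$ (i,j) = 1\<^sub>m N $$ (i,j)"
      using g transpose_mult_index[of V N N V N i j] unfolding F_def V_def by simp
  qed (simp_all add: V_def)
  then have V: "real_orthogonal N V" unfolding real_orthogonal_def V_def by simp
  have "entries V = g"
  proof
    fix p show "entries V p = g p" using g unfolding F_def entries_def V_def by (cases p) auto
  qed
  then show ?thesis using that[OF V] entries gmax V by metis
qed

section \<open>The orthogonal matrix nearest to a contraction\<close>

definition trace_maximal :: "nat \<Rightarrow> real mat \<Rightarrow> bool" where
  "trace_maximal N S \<longleftrightarrow> (\<forall>H. real_orthogonal N H \<longrightarrow> mtrace (transpose_mat H * S) \<le> mtrace S)"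

definition real_psd :: "nat \<Rightarrow> real mat \<Rightarrow> bool" where
  "real_psd N S \<longleftrightarrow> (\<forall>x. 0 \<le> (\<Sum>a<N. \<Sum>b<N. x a * S $$ (a,b) * x b))"

lemma real_orthogonal_householder:
  fixes x :: "nat \<Rightarrow> real"
  assumes c: "c * (\<Sum>r<N. x r * x r) = 2"
  shows "real_orthogonal N (Matrix.mat N N (\<lambda>(a,b). (if a = b then 1 else 0) - c * x a * x b))"
    (is "real_orthogonal N ?H")
proof -
  have H: "?H \<in> carrier_mat N N" by simp
  have "(transpose_mat ?H * ?H) $$ (i,j) = 1\<^sub>m N $$ (i,j)" if ij: "i < N" "j < N" for i j
  proof -
    have "(transpose_mat ?H * ?H) $$ (i,j) = (\<Sum>r<N. ?H $$ (r,i) * ?H $$ (r,j))"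
      using transpose_mult_index[OF H H ij] .
    also have "\<dots> = (\<Sum>r<N. (if r = i then if i = j then 1 else 0 else 0))
        - (\<Sum>r<N. if r = i then c * x r * x j else 0) - (\<Sum>r<N. if r = j then c * x r * x i else 0)
        + c * c * x i * x j * (\<Sum>r<N. x r * x r)"
    proof -
      have "?H $$ (r,i) * ?H $$ (r,j) = (if r = i then if i = j then 1 else 0 else 0)
          - (if r = i then c * x r * x j else 0) - (if r = j then c * x r * x i else 0)
          + c * c * x i * x j * (x r * x r)" if "r < N" for r
        using ij that by (auto simp: algebra_simps)
      then show ?thesis by (simp add: sum.distrib sum_subtractf sum_distrib_left)
    qed
    also have "\<dots> = (if i = j then 1 else 0) - 2 * c * x i * x j + c * x i * x j * (c * (\<Sum>r<N. x r * x r))"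
      using ij by (simp add: algebra_simps)
    also have "\<dots> = 1\<^sub>m N $$ (i,j)" using c ij by simp
    finally show ?thesis .
  qed
  then show ?thesis unfolding real_orthogonal_def using H by (auto intro: eq_matI)
qed

text \<open>Testing trace maximality against the reflection in the hyperplane orthogonal to \<open>x\<close>.\<close>

lemma trace_maximal_imp_psd:
  assumes S: "S \<in> carrier_mat N N" and max: "trace_maximal N S"
  shows "real_psd N S"
  unfolding real_psd_def
proof
  fix x :: "nat \<Rightarrow> real"
  define q where "q = (\<Sum>r<N. x r * x r)"
  have "q \<ge> 0" unfolding q_def by (intro sum_nonneg) auto
  show "0 \<le> (\<Sum>a<N. \<Sum>b<N. x a * S $$ (a,b) * x b)"
  proof (cases "q = 0")
    case True
    then have "\<forall>r<N. x r = 0" using sum_nonneg_eq_0_iff[of "{..<N}" "\<lambda>r. x r * x r"] unfolding q_def by auto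
    then show ?thesis by simp
  next
    case False
    with \<open>q \<ge> 0\<close> have q: "q > 0" by simp
    define H where "H = Matrix.mat N N (\<lambda>(a,b). (if a = b then 1 else 0) - 2 / q * x a * x b)"
    have Hc: "H \<in> carrier_mat N N" unfolding H_def by simp
    have H: "real_orthogonal N H" unfolding H_def using q by (intro real_orthogonal_householder) (simp add: q_def)
    have "mtrace (transpose_mat H * S) = (\<Sum>i<N. \<Sum>a<N. H $$ (a,i) * S $$ (a,i))"
      using mtrace_transpose_mult[OF Hc S] .
    also have "\<dots> = (\<Sum>i<N. \<Sum>a<N. (if a = i then S $$ (a,i) else 0) - 2 / q * (x a * S $$ (a,i) * x i))"
      by (intro sum.cong) (auto simp: H_def algebra_simps)
    also have "\<dots> = mtrace S - 2 / q * (\<Sum>i<N. \<Sum>a<N. x a * S $$ (a,i) * x i)"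
      using S by (simp add: sum_subtractf sum_distrib_left mtrace_def sum.delta)
    also have "(\<Sum>i<N. \<Sum>a<N. x a * S $$ (a,i) * x i) = (\<Sum>a<N. \<Sum>b<N. x a * S $$ (a,b) * x b)"
      by (rule sum.swap)
    finally have "0 \<le> 2 / q * (\<Sum>a<N. \<Sum>b<N. x a * S $$ (a,b) * x b)"
      using max H unfolding trace_maximal_def by auto
    then show ?thesis using q by (simp add: zero_le_divide_iff)
  qed
qed

definition givens :: "nat \<Rightarrow> nat \<Rightarrow> nat \<Rightarrow> real \<Rightarrow> real \<Rightarrow> real mat" where
  "givens N i j c s = Matrix.mat N N (\<lambda>(a,b). if a = b then (if a = i \<or> a = j then c else 1)
      else if a = j \<and> b = i then s else if a = i \<and> b = j then -s else 0)"

lemma sum_split_two: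
  assumes "i < (N::nat)" "j < N" "i \<noteq> j"
  shows "(\<Sum>r<N. f r) = f i + f j + (\<Sum>r\<in>{..<N}-{i,j}. f r)"
  using sum.subset_diff[of "{i,j}" "{..<N}" f] assms by (simp add: ac_simps)

lemma real_orthogonal_givens:
  assumes ij: "i < N" "j < N" "i \<noteq> j" and cs: "c\<^sup>2 + s\<^sup>2 = 1"
  shows "real_orthogonal N (givens N i j c s)"
proof -
  define G where "G = givens N i j c s"
  have G: "G \<in> carrier_mat N N" unfolding G_def givens_def by simp
  have "(transpose_mat G * G) $$ (p,q) = 1\<^sub>m N $$ (p,q)" if pq: "p < N" "q < N" for p q
  proof -
    have rest: "(\<Sum>r\<in>{..<N}-{i,j}. G $$ (r,p) * G $$ (r,q)) = (if p = q \<and> p \<notin> {i,j} then 1 else 0)"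
    proof -
      have "(\<Sum>r\<in>{..<N}-{i,j}. G $$ (r,p) * G $$ (r,q)) =
          (\<Sum>r\<in>{..<N}-{i,j}. if r = p then (if p = q then 1 else 0) else 0)"
        using pq by (intro sum.cong) (auto simp: G_def givens_def)
      then show ?thesis using pq by (simp add: sum.delta)
    qed
    have "(transpose_mat G * G) $$ (p,q) = (\<Sum>r<N. G $$ (r,p) * G $$ (r,q))"
      using transpose_mult_index[OF G G pq] .
    also have "\<dots> = G $$ (i,p) * G $$ (i,q) + G $$ (j,p) * G $$ (j,q) + (if p = q \<and> p \<notin> {i,j} then 1 else 0)"
      using sum_split_two[OF ij, of "\<lambda>r. G $$ (r,p) * G $$ (r,q)"] rest by simp
    also have "\<dots> = 1\<^sub>m N $$ (p,q)"
      using pq ij cs by (auto simp: G_def givens_def algebra_simps power2_eq_square)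
    finally show ?thesis .
  qed
  then show ?thesis unfolding real_orthogonal_def G_def[symmetric] using G by (auto intro: eq_matI)
qed

lemma mtrace_givens:
  assumes S: "S \<in> carrier_mat N N" and ij: "i < N" "j < N" "i \<noteq> j"
  shows "mtrace (transpose_mat (givens N i j c s) * S) =
     mtrace S + (c - 1) * (S $$ (i,i) + S $$ (j,j)) + s * (S $$ (j,i) - S $$ (i,j))"
proof -
  define G where "G = givens N i j c s"
  have G: "G \<in> carrier_mat N N" unfolding G_def givens_def by simp
  have "mtrace (transpose_mat G * S) = (\<Sum>b<N. \<Sum>a<N. G $$ (a,b) * S $$ (a,b))"
    using mtrace_transpose_mult[OF G S] .
  also have "\<dots> = (\<Sum>b<N. \<Sum>a<N. (if a = b then S $$ (a,b) else 0)
     + (if a = i then if b = i then (c - 1) * S $$ (a,b) else 0 else 0)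
     + (if a = j then if b = j then (c - 1) * S $$ (a,b) else 0 else 0)
     + (if a = j then if b = i then s * S $$ (a,b) else 0 else 0)
     + (if a = i then if b = j then - s * S $$ (a,b) else 0 else 0))"
    using ij by (intro sum.cong) (auto simp: G_def givens_def algebra_simps)
  also have "\<dots> = mtrace S + (c - 1) * (S $$ (i,i) + S $$ (j,j)) + s * (S $$ (j,i) - S $$ (i,j))"
    using ij S by (simp add: sum.distrib sum.delta mtrace_def algebra_simps)
  finally show ?thesis unfolding G_def .
qed

text \<open>The rational parametrisation \<open>(c, s) = ((1 - x\<^sup>2) / (1 + x\<^sup>2), 2x / (1 + x\<^sup>2))\<close> of the circle
  turns the hypothesis into \<open>x d \<le> x\<^sup>2 T\<close>, which fails for small \<open>x\<close> of the sign of \<open>d\<close>.\<close>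

lemma circle_linear_bound_imp_zero:
  fixes T d :: real
  assumes bound: "\<And>c s. c\<^sup>2 + s\<^sup>2 = 1 \<Longrightarrow> (c - 1) * T + s * d \<le> 0"
  shows "d = 0"
proof (rule ccontr)
  assume "d \<noteq> 0"
  then have D: "d\<^sup>2 > 0" by simp
  define m where "m = \<bar>T\<bar> + 1"
  define x where "x = d / (2 * m)"
  have m: "m > 0" "\<bar>T\<bar> < m" unfolding m_def by auto
  have pos: "1 + x\<^sup>2 > 0" by (simp add: add_pos_nonneg)
  define c where "c = (1 - x\<^sup>2) / (1 + x\<^sup>2)"
  define s where "s = 2 * x / (1 + x\<^sup>2)"
  have "c\<^sup>2 + s\<^sup>2 = ((1 - x\<^sup>2)\<^sup>2 + (2 * x)\<^sup>2) / (1 + x\<^sup>2)\<^sup>2"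
    unfolding c_def s_def by (simp add: power_divide add_divide_distrib)
  also have "(1 - x\<^sup>2)\<^sup>2 + (2 * x)\<^sup>2 = (1 + x\<^sup>2)\<^sup>2" by (simp add: power2_eq_square algebra_simps)
  also have "(1 + x\<^sup>2)\<^sup>2 / (1 + x\<^sup>2)\<^sup>2 = 1" using pos by simp
  finally have "(c - 1) * T + s * d \<le> 0" by (rule bound)
  moreover have "c - 1 = - 2 * x\<^sup>2 / (1 + x\<^sup>2)" unfolding c_def using pos by (simp add: field_simps)
  then have "(c - 1) * T + s * d = - 2 * x\<^sup>2 / (1 + x\<^sup>2) * T + 2 * x / (1 + x\<^sup>2) * d"
    unfolding s_def by simp
  also have "\<dots> = 2 * (x * d - x\<^sup>2 * T) / (1 + x\<^sup>2)"
    by (simp add: add_divide_distrib diff_divide_distrib algebra_simps)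
  ultimately have "2 * (x * d - x\<^sup>2 * T) / (1 + x\<^sup>2) \<le> 0" by linarith
  then have "x * d \<le> x\<^sup>2 * T" using pos by (smt (verit) divide_pos_pos)
  moreover have "x * d = d\<^sup>2 / (2 * m)" unfolding x_def by (simp add: power2_eq_square)
  moreover have "x\<^sup>2 * T \<le> d\<^sup>2 / (4 * m)"
  proof -
    have "x\<^sup>2 * T \<le> x\<^sup>2 * m" using m by (intro mult_left_mono) auto
    also have "\<dots> = d\<^sup>2 / (4 * m)" unfolding x_def using m by (simp add: power2_eq_square field_simps)
    finally show ?thesis .
  qed
  moreover have "d\<^sup>2 / (4 * m) < d\<^sup>2 / (2 * m)" using m D by (simp add: frac_less2)
  ultimately show False by linarith
qed

lemma trace_maximal_symmetric:
  assumes S: "S \<in> carrier_mat N N" and max: "trace_maximal N S"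
  shows "transpose_mat S = S"
proof -
  have "S $$ (j,i) = S $$ (i,j)" if ij: "i < N" "j < N" "i \<noteq> j" for i j
  proof -
    have "(c - 1) * (S $$ (i,i) + S $$ (j,j)) + s * (S $$ (j,i) - S $$ (i,j)) \<le> 0"
      if "c\<^sup>2 + s\<^sup>2 = 1" for c s
      using max real_orthogonal_givens[OF ij that] mtrace_givens[OF S ij, of c s]
      unfolding trace_maximal_def by fastforce
    then show ?thesis using circle_linear_bound_imp_zero by fastforce
  qed
  then have "transpose_mat S $$ (i,j) = S $$ (i,j)" if "i < N" "j < N" for i j
    using that S by (cases "i = j") auto
  then show ?thesis using S by (intro eq_matI) auto
qed

lemma real_psd_mtrace_congruence:
  assumes S: "S \<in> carrier_mat N N" and Y: "Y \<in> carrier_mat N m" and psd: "real_psd N S"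
  shows "0 \<le> mtrace (transpose_mat Y * S * Y)"
proof -
  have "(transpose_mat Y * S * Y) $$ (i,i) = (\<Sum>a<N. \<Sum>b<N. Y $$ (a,i) * S $$ (a,b) * Y $$ (b,i))"
    if "i < m" for i
    using that S Y by (simp add: scalar_prod_def atLeast0LessThan sum_distrib_left mult.assoc)
  then have "mtrace (transpose_mat Y * S * Y) = (\<Sum>i<m. \<Sum>a<N. \<Sum>b<N. Y $$ (a,i) * S $$ (a,b) * Y $$ (b,i))"
    using Y unfolding mtrace_def by simp
  also have "\<dots> \<ge> 0"
  proof (rule sum_nonneg)
    fix i show "0 \<le> (\<Sum>a<N. \<Sum>b<N. Y $$ (a,i) * S $$ (a,b) * Y $$ (b,i))"
      using psd[unfolded real_psd_def, rule_format, of "\<lambda>a. Y $$ (a,i)"] by simp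
  qed
  finally show ?thesis .
qed

text \<open>For symmetric positive semidefinite \<open>S\<close> with \<open>S\<^sup>2 \<le> 1\<close>, both \<open>S (1 - S)\<^sup>2\<close> and
  \<open>S (1 - S\<^sup>2)\<close> have nonnegative trace; adding the two gives \<open>tr S\<^sup>2 \<le> tr S\<close>.\<close>

lemma mtrace_square_le_mtrace:
  fixes S B :: "real mat"
  assumes S: "S \<in> carrier_mat N N" and B: "B \<in> carrier_mat N N"
    and sym: "transpose_mat S = S" and psd: "real_psd N S"
    and SB: "S * S + transpose_mat B * B = 1\<^sub>m N"
  shows "mtrace (S * S) \<le> mtrace S"
proof -
  have SS: "S * S \<in> carrier_mat N N" and SSS: "S * S * S \<in> carrier_mat N N" using S by auto
  have X: "1\<^sub>m N - S \<in> carrier_mat N N" using S by (simp add: minus_carrier_mat)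
  have "0 \<le> mtrace (transpose_mat (1\<^sub>m N - S) * S * (1\<^sub>m N - S))"
    by (rule real_psd_mtrace_congruence[OF S X psd])
  also have "transpose_mat (1\<^sub>m N - S) * S * (1\<^sub>m N - S) = (S - S * S) - (S * S - S * S * S)"
  proof -
    have "(1\<^sub>m N - S) * S = S - S * S" using S by (simp add: minus_mult_distrib_mat[OF one_carrier_mat S S])
    moreover have "(S - S * S) * (1\<^sub>m N - S) = S * (1\<^sub>m N - S) - (S * S) * (1\<^sub>m N - S)"
      using S by (simp add: minus_mult_distrib_mat[OF S SS X])
    moreover have "S * (1\<^sub>m N - S) = S - S * S" using S by (simp add: mult_minus_distrib_mat[OF S one_carrier_mat S])
    moreover have "(S * S) * (1\<^sub>m N - S) = S * S - S * S * S" using S by (simp add: mult_minus_distrib_mat[OF SS one_carrier_mat S])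
    moreover have "transpose_mat (1\<^sub>m N - S) = 1\<^sub>m N - S" using S sym by (simp add: transpose_minus[OF one_carrier_mat S])
    ultimately show ?thesis by simp
  qed
  finally have F1: "0 \<le> mtrace S - 2 * mtrace (S * S) + mtrace (S * S * S)"
    using S SS SSS by (simp add: mtrace_minus[of _ N] minus_carrier_mat)
  have BB: "transpose_mat B * B = 1\<^sub>m N - S * S"
  proof (rule eq_matI)
    fix i j assume "i < dim_row (1\<^sub>m N - S * S)" "j < dim_col (1\<^sub>m N - S * S)"
    then have ij: "i < N" "j < N" using S by auto
    have "(S * S + transpose_mat B * B) $$ (i,j) = 1\<^sub>m N $$ (i,j)" using SB by simp
    then show "(transpose_mat B * B) $$ (i,j) = (1\<^sub>m N - S * S) $$ (i,j)" using ij S B by simp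
  qed (use S B in auto)
  have BT: "transpose_mat B \<in> carrier_mat N N" using B by simp
  have "0 \<le> mtrace (transpose_mat (transpose_mat B) * S * transpose_mat B)"
    by (rule real_psd_mtrace_congruence[OF S BT psd])
  also have "transpose_mat (transpose_mat B) * S * transpose_mat B = B * (S * transpose_mat B)"
    using B S by simp
  also have "mtrace (B * (S * transpose_mat B)) = mtrace ((S * transpose_mat B) * B)"
    using B S by (intro mtrace_mult_comm) auto
  also have "(S * transpose_mat B) * B = S * (1\<^sub>m N - S * S)"
    using B S by (simp add: BB[symmetric])
  also have "\<dots> = S - S * S * S" using S by (simp add: mult_minus_distrib_mat[OF S one_carrier_mat SS])
  finally show ?thesis using F1 S SSS by (simp add: mtrace_minus[of _ N])
qed

lemma frobenius_sq_minus_real_orthogonal: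
  assumes A: "A \<in> carrier_mat N N" and V: "real_orthogonal N V"
  shows "frobenius_sq (A - V) = frobenius_sq A - 2 * mtrace (transpose_mat V * A) + real N"
proof -
  have Vc: "V \<in> carrier_mat N N" using V unfolding real_orthogonal_def by simp
  have "mtrace (transpose_mat V * A) = (\<Sum>i<N. \<Sum>a<N. V $$ (a,i) * A $$ (a,i))"
    using mtrace_transpose_mult[OF Vc A] .
  also have "\<dots> = (\<Sum>a<N. \<Sum>i<N. V $$ (a,i) * A $$ (a,i))" by (rule sum.swap)
  finally have tr: "mtrace (transpose_mat V * A) = (\<Sum>a<N. \<Sum>i<N. V $$ (a,i) * A $$ (a,i))" .
  have "frobenius_sq (A - V) = (\<Sum>a<N. \<Sum>i<N. (A $$ (a,i))\<^sup>2) - 2 * (\<Sum>a<N. \<Sum>i<N. V $$ (a,i) * A $$ (a,i))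
      + (\<Sum>a<N. \<Sum>i<N. (V $$ (a,i))\<^sup>2)"
    using A Vc unfolding frobenius_sq_def
    by (simp add: power2_diff sum.distrib sum_subtractf sum_distrib_left algebra_simps)
  also have "\<dots> = frobenius_sq A - 2 * mtrace (transpose_mat V * A) + frobenius_sq V"
    using A Vc unfolding frobenius_sq_def tr by simp
  finally show ?thesis using V unfolding real_orthogonal_def by (simp add: frobenius_sq_mtrace[OF Vc])
qed

text \<open>The optimal \<open>V\<close> is the orthogonal factor of the polar decomposition \<open>A = V S\<close>;
  only the trace maximality of \<open>V\<close> is used, from which \<open>S\<close> is symmetric positive semidefinite
  with \<open>S\<^sup>2 = A\<^sup>T A \<le> 1\<close>.\<close>

lemma real_orthogonal_approximation:
  fixes A B :: "real mat"
  assumes A: "A \<in> carrier_mat N N" and B: "B \<in> carrier_mat N N"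
    and AB: "transpose_mat A * A + transpose_mat B * B = 1\<^sub>m N"
  obtains V where "real_orthogonal N V" "frobenius_sq (A - V) \<le> frobenius_sq B"
proof -
  obtain V where V: "real_orthogonal N V"
    and max: "\<And>W. real_orthogonal N W \<Longrightarrow> mtrace (transpose_mat W * A) \<le> mtrace (transpose_mat V * A)"
    using real_orthogonal_trace_maximizer[OF A] by blast
  have Vc: "V \<in> carrier_mat N N" using V unfolding real_orthogonal_def by simp
  define S where "S = transpose_mat V * A"
  have S: "S \<in> carrier_mat N N" unfolding S_def using Vc A by simp
  have "trace_maximal N S" unfolding trace_maximal_def
  proof (intro allI impI)
    fix H assume H: "real_orthogonal N H"
    then have Hc: "H \<in> carrier_mat N N" unfolding real_orthogonal_def by simp
    have "transpose_mat (V * H) * A = transpose_mat H * S"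
      unfolding S_def using Vc Hc A by (simp add: transpose_mult assoc_mult_mat[of _ N N _ N A N])
    then show "mtrace (transpose_mat H * S) \<le> mtrace S"
      using max[OF real_orthogonal_mult[OF V H]] unfolding S_def by simp
  qed
  then have psd: "real_psd N S" and sym: "transpose_mat S = S"
    using trace_maximal_imp_psd trace_maximal_symmetric S by auto
  have SS: "S * S = transpose_mat A * A"
  proof -
    have "S * S = transpose_mat A * (V * transpose_mat V) * A"
      using sym[symmetric] Vc A unfolding S_def
      by (simp add: transpose_mult assoc_mult_mat[of _ N N _ N _ N])
    then show ?thesis using real_orthogonal_mult_transpose[OF V] A by simp
  qed
  have "mtrace (S * S) \<le> mtrace S"
    using mtrace_square_le_mtrace[OF S B sym psd] AB SS by simp
  moreover have "mtrace (S * S) + frobenius_sq B = real N"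
    using mtrace_add[of "transpose_mat A * A" N "transpose_mat B * B"] AB SS A B
    by (simp add: frobenius_sq_mtrace[OF B])
  moreover have "frobenius_sq (A - V) = mtrace (S * S) - 2 * mtrace S + real N"
    using frobenius_sq_minus_real_orthogonal[OF A V] frobenius_sq_mtrace[OF A] SS unfolding S_def by simp
  ultimately show ?thesis using that[OF V] by simp
qed

section \<open>Unitaries far from the orthogonal group\<close>

lemma mtrace_mult_transpose:
  assumes "M \<in> carrier_mat n m"
  shows "mtrace (M * transpose_mat M) = (\<Sum>a<n. \<Sum>i<m. M $$ (a,i) * M $$ (a,i))"
  using assms unfolding mtrace_def by (intro sum.cong) (auto simp: scalar_prod_def atLeast0LessThan)

lemma mtrace_smult_mult_transpose:
  assumes "M \<in> carrier_mat n m"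
  shows "mtrace ((c \<cdot>\<^sub>m M) * transpose_mat (c \<cdot>\<^sub>m M)) = c\<^sup>2 * mtrace (M * transpose_mat M)"
  using assms by (simp add: mtrace_mult_transpose[of _ n m] sum_distrib_left power2_eq_square algebra_simps)

lemma of_real_mat_mult:
  assumes "X \<in> carrier_mat n m" "Y \<in> carrier_mat m k"
  shows "map_mat complex_of_real (X * Y) = map_mat complex_of_real X * map_mat complex_of_real Y"
  using assms by (intro eq_matI) (auto simp: scalar_prod_def)

lemma of_real_orthogonal_in_orth_group:
  assumes V: "real_orthogonal N V"
  shows "map_mat complex_of_real V \<in> orth_group N"
proof -
  define M where "M = map_mat complex_of_real V"
  have Vc: "V \<in> carrier_mat N N" using V unfolding real_orthogonal_def by simp
  have adj_M: "adj M = transpose_mat M" unfolding M_def by (intro eq_matI) (auto simp: adj_def)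
  have one: "map_mat complex_of_real (1\<^sub>m N) = 1\<^sub>m N" by auto
  have "transpose_mat M * M = map_mat complex_of_real (transpose_mat V * V)"
    "M * transpose_mat M = map_mat complex_of_real (V * transpose_mat V)"
    unfolding M_def map_mat_transpose using Vc by (auto intro!: of_real_mat_mult[symmetric])
  then have "transpose_mat M * M = 1\<^sub>m N" "M * transpose_mat M = 1\<^sub>m N"
    using V real_orthogonal_mult_transpose[OF V] one unfolding real_orthogonal_def by simp_all
  moreover have "M \<in> carrier_mat N N" unfolding M_def using Vc by simp
  ultimately have "M \<in> orth_group N" unfolding orth_group_def unitary_mat_def by (simp add: adj_M)
  then show ?thesis unfolding M_def .
qed

lemma unitary_mat_smult:
  assumes U: "unitary_mat N U" and w: "cmod w = 1"
  shows "unitary_mat N (w \<cdot>\<^sub>m U)"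
proof -
  have Uc: "U \<in> carrier_mat N N" and aUc: "adj U \<in> carrier_mat N N"
    using U unfolding unitary_mat_def by (auto simp: adj_def)
  have adj: "adj (w \<cdot>\<^sub>m U) = cnj w \<cdot>\<^sub>m adj U" by (intro eq_matI) (auto simp: adj_def)
  have ww: "w * cnj w = 1" "cnj w * w = 1"
    using complex_norm_square[of w] w by (simp_all add: mult.commute)
  have "(w \<cdot>\<^sub>m U) * adj (w \<cdot>\<^sub>m U) = (w * cnj w) \<cdot>\<^sub>m (U * adj U)"
    "adj (w \<cdot>\<^sub>m U) * (w \<cdot>\<^sub>m U) = (cnj w * w) \<cdot>\<^sub>m (adj U * U)"
    unfolding adj using Uc aUc by (auto simp: mult_smult_assoc_mat mult_smult_distrib intro!: eq_matI)
  moreover have "1 \<cdot>\<^sub>m 1\<^sub>m N = (1\<^sub>m N :: complex mat)" by (intro eq_matI) auto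
  ultimately show ?thesis using U ww unfolding unitary_mat_def by simp
qed

lemma unitary_re_im_orthonormal:
  assumes U: "unitary_mat N U"
  shows "transpose_mat (map_mat Re U) * map_mat Re U + transpose_mat (map_mat Im U) * map_mat Im U = 1\<^sub>m N"
    (is "transpose_mat ?A * ?A + transpose_mat ?B * ?B = _")
proof (rule eq_matI)
  have Uc: "U \<in> carrier_mat N N" using U unfolding unitary_mat_def by simp
  then have A: "?A \<in> carrier_mat N N" and B: "?B \<in> carrier_mat N N" by auto
  fix i j assume "i < dim_row (1\<^sub>m N)" "j < dim_col (1\<^sub>m N)"
  then have ij: "i < N" "j < N" by auto
  have "(transpose_mat ?A * ?A + transpose_mat ?B * ?B) $$ (i,j)
      = (\<Sum>a<N. ?A $$ (a,i) * ?A $$ (a,j)) + (\<Sum>a<N. ?B $$ (a,i) * ?B $$ (a,j))"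
    using transpose_mult_index[OF A A ij] transpose_mult_index[OF B B ij] ij A B by simp
  also have "\<dots> = (\<Sum>a<N. Re (cnj (U $$ (a,i)) * U $$ (a,j)))"
    unfolding sum.distrib[symmetric] using ij Uc by (intro sum.cong) auto
  also have "\<dots> = Re ((adj U * U) $$ (i,j))"
    using Uc ij by (simp add: adj_def scalar_prod_def atLeast0LessThan Re_sum)
  finally show "(transpose_mat ?A * ?A + transpose_mat ?B * ?B) $$ (i,j) = 1\<^sub>m N $$ (i,j)"
    using U ij unfolding unitary_mat_def by simp
qed (use U in \<open>auto simp: unitary_mat_def\<close>)

lemma fnorm_sq: "(fnorm X)\<^sup>2 = (\<Sum>i<dim_row X. \<Sum>j<dim_col X. (cmod (X $$ (i,j)))\<^sup>2)"
  unfolding fnorm_def by (simp add: sum_nonneg)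

lemma fnorm_minus_of_real_sq:
  assumes "M \<in> carrier_mat n m" "V \<in> carrier_mat n m"
  shows "(fnorm (M - map_mat complex_of_real V))\<^sup>2
    = frobenius_sq (map_mat Re M - V) + frobenius_sq (map_mat Im M)"
proof -
  have "(cmod ((M - map_mat complex_of_real V) $$ (i,j)))\<^sup>2
      = (Re (M $$ (i,j)) - V $$ (i,j))\<^sup>2 + (Im (M $$ (i,j)))\<^sup>2" if "i < n" "j < m" for i j
    using assms that by (simp add: cmod_power2)
  then show ?thesis using assms unfolding fnorm_sq frobenius_sq_def by (simp add: sum.distrib)
qed

lemma frobenius_sq_re_minus_im:
  assumes "M \<in> carrier_mat n m"
  shows "frobenius_sq (map_mat Re M) - frobenius_sq (map_mat Im M) = Re (mtrace (M * transpose_mat M))"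
  using assms unfolding frobenius_sq_def
  by (simp add: mtrace_mult_transpose[OF assms] Re_sum sum_subtractf power2_eq_square)

lemma cis_in_period: "\<exists>\<theta>\<in>{0..<2*pi}. cis \<theta> = cis t"
proof -
  define k where "k = \<lfloor>t / (2*pi)\<rfloor>"
  define \<theta> where "\<theta> = t - 2*pi*k"
  have "k \<le> t / (2*pi)" "t / (2*pi) < k + 1" unfolding k_def by linarith+
  then have "2*pi*k \<le> t" "t < 2*pi*k + 2*pi" using pi_gt_zero by (simp_all add: field_simps)
  then have "\<theta> \<in> {0..<2*pi}" unfolding \<theta>_def by auto
  moreover have "cis \<theta> = cis t * cis (- (2*pi*k))" unfolding \<theta>_def by (simp add: cis_mult)
  moreover have "cis (- (2*pi*k)) = 1" using cis_multiple_2pi[of "- real_of_int k"] by simp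
  ultimately show ?thesis by auto
qed

lemma phase_aligning_square:
  obtains \<theta> where "\<theta> \<in> {0..<2*pi}" "cis \<theta> * cis \<theta> * s = complex_of_real (cmod s)"
proof -
  obtain \<theta> where \<theta>: "\<theta> \<in> {0..<2*pi}" "cis \<theta> = cis (- (Arg s / 2))"
    using cis_in_period by blast
  have "cis \<theta> * cis \<theta> = cis (- Arg s)" using \<theta>(2) by (simp add: cis_mult)
  moreover have "s = complex_of_real (cmod s) * cis (Arg s)" using rcis_cmod_Arg[of s] by (simp add: rcis_def)
  ultimately have "cis \<theta> * cis \<theta> * s = complex_of_real (cmod s) * (cis (- Arg s) * cis (Arg s))"
    by (metis mult.commute mult.left_commute)
  also have "cis (- Arg s) * cis (Arg s) = 1" by (simp add: cis_mult)
  finally show ?thesis using that \<theta>(1) by simp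
qed

lemma eps_far_imp_fnorm_sq_ge:
  assumes far: "eps_far N \<epsilon> S U" and V: "V \<in> S" and \<theta>: "\<theta> \<in> {0..<2*pi}"
    and N: "N > 0" and \<epsilon>: "\<epsilon> \<ge> 0"
  shows "2 * real N * \<epsilon>\<^sup>2 \<le> (fnorm (cis \<theta> \<cdot>\<^sub>m U - V))\<^sup>2"
proof -
  define F where "F = fnorm (cis \<theta> \<cdot>\<^sub>m U - V)"
  have "\<epsilon> \<le> Dist N U V" using far V unfolding eps_far_def by blast
  also have "\<dots> \<le> F / sqrt (2 * real N)"
    unfolding Dist_def F_def cis_conv_exp
    by (rule cINF_lower[OF _ \<theta>], rule bdd_belowI[of _ 0])
      (auto simp: fnorm_def intro!: divide_nonneg_nonneg sum_nonneg)
  finally have "\<epsilon>\<^sup>2 \<le> (F / sqrt (2 * real N))\<^sup>2" using \<epsilon> by (rule power_mono)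
  also have "\<dots> = F\<^sup>2 / (2 * real N)" by (simp only: power_divide real_sqrt_pow2[of "2 * real N"])
  finally have "\<epsilon>\<^sup>2 * (2 * real N) \<le> F\<^sup>2" using N by (simp add: le_divide_eq)
  then show ?thesis unfolding F_def by (simp add: algebra_simps)
qed

lemma eps_far_orth_group_trace_bound:
  assumes U: "unitary_mat N U" and far: "eps_far N \<epsilon> (orth_group N) U"
    and N: "N > 0" and \<epsilon>: "\<epsilon> \<ge> 0"
  shows "cmod (mtrace (U * transpose_mat U)) \<le> real N * (1 - 2 * \<epsilon>\<^sup>2)"
proof -
  define s where "s = mtrace (U * transpose_mat U)"
  obtain \<theta> where \<theta>: "\<theta> \<in> {0..<2*pi}" and ws: "cis \<theta> * cis \<theta> * s = complex_of_real (cmod s)"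
    using phase_aligning_square by blast
  define W where "W = cis \<theta> \<cdot>\<^sub>m U"
  define A where "A = map_mat Re W"
  define B where "B = map_mat Im W"
  have Uc: "U \<in> carrier_mat N N" using U unfolding unitary_mat_def by simp
  have Wc: "W \<in> carrier_mat N N" and A: "A \<in> carrier_mat N N" and B: "B \<in> carrier_mat N N"
    using Uc unfolding W_def A_def B_def by auto
  have "unitary_mat N W" unfolding W_def by (rule unitary_mat_smult[OF U]) simp
  then have AB: "transpose_mat A * A + transpose_mat B * B = 1\<^sub>m N"
    unfolding A_def B_def by (rule unitary_re_im_orthonormal)
  obtain V where V: "real_orthogonal N V" and appr: "frobenius_sq (A - V) \<le> frobenius_sq B"
    using real_orthogonal_approximation[OF A B AB] by blast
  have Vc: "V \<in> carrier_mat N N" using V unfolding real_orthogonal_def by simp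
  have "frobenius_sq A + frobenius_sq B = real N"
    using mtrace_add[of "transpose_mat A * A" N "transpose_mat B * B"] AB A B
    by (simp add: frobenius_sq_mtrace[OF A] frobenius_sq_mtrace[OF B])
  moreover have "frobenius_sq A - frobenius_sq B = cmod s"
  proof -
    have "mtrace (W * transpose_mat W) = (cis \<theta>)\<^sup>2 * s"
      unfolding W_def s_def by (rule mtrace_smult_mult_transpose[OF Uc])
    also have "\<dots> = complex_of_real (cmod s)" using ws by (simp only: power2_eq_square)
    finally show ?thesis using frobenius_sq_re_minus_im[OF Wc] unfolding A_def B_def by simp
  qed
  moreover have "(fnorm (W - map_mat complex_of_real V))\<^sup>2 = frobenius_sq (A - V) + frobenius_sq B"
    unfolding A_def B_def using fnorm_minus_of_real_sq[OF Wc Vc] .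
  moreover have "2 * real N * \<epsilon>\<^sup>2 \<le> (fnorm (W - map_mat complex_of_real V))\<^sup>2"
    unfolding W_def using eps_far_imp_fnorm_sq_ge[OF far of_real_orthogonal_in_orth_group[OF V] \<theta> N \<epsilon>] .
  ultimately have "2 * real N * \<epsilon>\<^sup>2 \<le> real N - cmod s" using appr by linarith
  then show ?thesis unfolding s_def by (simp add: algebra_simps)
qed

lemma has_property_orth_group_trace:
  assumes "has_property N (orth_group N) U"
  shows "cmod (mtrace (U * transpose_mat U)) = real N"
proof -
  obtain V \<theta> where V: "V \<in> orth_group N" and U: "U = exp (\<i> * complex_of_real \<theta>) \<cdot>\<^sub>m V"
    using assms unfolding has_property_def by blast
  have "V \<in> carrier_mat N N" "V * transpose_mat V = 1\<^sub>m N"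
    using V unfolding orth_group_def unitary_mat_def by auto
  then have "mtrace (U * transpose_mat U) = (cis \<theta>)\<^sup>2 * of_nat N"
    unfolding U cis_conv_exp[symmetric] by (simp add: mtrace_smult_mult_transpose)
  then show ?thesis by (simp add: norm_mult norm_power)
qed

section \<open>Tensor products and permutations of vectors\<close>

lemma mult_add_lt_mult: "x < (p::nat) \<Longrightarrow> y < q \<Longrightarrow> x * q + y < p * q"
proof -
  assume "x < p" "y < q"
  then have "x * q + y < Suc x * q" by simp
  also have "\<dots> \<le> p * q" using \<open>x < p\<close> by (intro mult_right_mono) auto
  finally show ?thesis .
qed

lemma mod_div_lt_of_lt_mult:
  assumes "i < p * (q::nat)"
  shows "i mod p < p" "i div p < q"
proof -
  have "p > 0" using assms by (cases "p = 0") auto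
  then show "i mod p < p" "i div p < q" using assms by (auto simp: div_less_iff_less_mult mult.commute)
qed

lemma sum_lessThan_mult_split: "(\<Sum>j<(p::nat) * q. f j) = (\<Sum>a<p. \<Sum>b<q. f (a * q + b))"
proof (induction p)
  case (Suc p)
  have e: "Suc p * q = p * q + q" by simp
  have "(\<Sum>j<Suc p * q. f j) = (\<Sum>j\<in>{0..<p * q}. f j) + (\<Sum>j\<in>{p * q..<p * q + q}. f j)"
    unfolding e lessThan_atLeast0 by (rule sum.atLeastLessThan_concat[symmetric]) auto
  also have "(\<Sum>j\<in>{p * q..<p * q + q}. f j) = (\<Sum>b\<in>{0..<q}. f (b + p * q))"
    using sum.shift_bounds_nat_ivl[of f 0 "p * q" q] by (simp add: add.commute[of q])
  finally show ?case using Suc.IH by (simp add: lessThan_atLeast0 add.commute[of _ "p * q"])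
qed simp

definition tensor_vec :: "'a::comm_semiring_1 Matrix.vec \<Rightarrow> 'a Matrix.vec \<Rightarrow> 'a Matrix.vec" where
  "tensor_vec a b = Matrix.vec (dim_vec a * dim_vec b) (\<lambda>i. a $ (i div dim_vec b) * b $ (i mod dim_vec b))"

lemma dim_tensor_vec [simp]: "dim_vec (tensor_vec a b) = dim_vec a * dim_vec b"
  unfolding tensor_vec_def by simp

lemma index_tensor_vec:
  "i < dim_vec a * dim_vec b \<Longrightarrow> tensor_vec a b $ i = a $ (i div dim_vec b) * b $ (i mod dim_vec b)"
  unfolding tensor_vec_def by simp

lemma index_tensor_vec_pair:
  assumes "x < dim_vec a" "y < dim_vec b"
  shows "tensor_vec a b $ (x * dim_vec b + y) = a $ x * b $ y"
proof -
  have "dim_vec b \<noteq> 0" using assms by auto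
  then have "(x * dim_vec b + y) div dim_vec b = x" "(x * dim_vec b + y) mod dim_vec b = y"
    using assms by auto
  then show ?thesis using mult_add_lt_mult[OF assms] by (simp add: index_tensor_vec)
qed

lemma tensor_vec_assoc: "tensor_vec (tensor_vec a b) c = tensor_vec a (tensor_vec b c)"
proof (rule eq_vecI)
  fix i assume "i < dim_vec (tensor_vec a (tensor_vec b c))"
  then have i: "i < dim_vec a * (dim_vec b * dim_vec c)" by simp
  define nb nc where "nb = dim_vec b" and "nc = dim_vec c"
  have pos: "nb > 0" "nc > 0" using i unfolding nb_def nc_def by (auto intro: Nat.gr0I)
  have "i div nc < dim_vec a * nb"
    using i pos by (simp add: div_less_iff_less_mult mult.assoc mult.commute[of nc] nb_def nc_def)
  then have "tensor_vec (tensor_vec a b) c $ i = a $ (i div nc div nb) * b $ (i div nc mod nb) * c $ (i mod nc)"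
    using i by (simp add: index_tensor_vec nb_def nc_def mult.assoc)
  moreover have "tensor_vec a (tensor_vec b c) $ i
      = a $ (i div (nb * nc)) * (b $ (i mod (nb * nc) div nc) * c $ (i mod (nb * nc) mod nc))"
    using i pos by (simp add: index_tensor_vec nb_def nc_def)
  moreover have "i div nc div nb = i div (nb * nc)"
    using div_mult2_eq[of i nc nb] by (simp only: mult.commute[of nc nb])
  moreover have "i mod (nb * nc) div nc = i div nc mod nb"
    using mod_mult2_eq[of i nc nb] pos by (simp add: mult.commute[of nb])
  moreover have "i mod (nb * nc) mod nc = i mod nc" by (simp add: mod_mod_cancel)
  ultimately show "tensor_vec (tensor_vec a b) c $ i = tensor_vec a (tensor_vec b c) $ i"
    by (simp add: mult.assoc)
qed (simp add: mult.assoc)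

lemma tensor_vec_unit_left [simp]: "tensor_vec (unit_vec (Suc 0) 0) v = v"
  by (rule eq_vecI) (auto simp: tensor_vec_def unit_vec_def)

lemma tensor_vec_unit_right [simp]: "tensor_vec v (unit_vec (Suc 0) 0) = v"
  by (rule eq_vecI) (auto simp: tensor_vec_def unit_vec_def)

lemma kron_one_mult_tensor_vec:
  assumes A: "A \<in> carrier_mat n n" and p: "dim_vec p = n" and r: "dim_vec r = L"
  shows "kron A (1\<^sub>m L) *\<^sub>v tensor_vec p r = tensor_vec (A *\<^sub>v p) r"
proof (rule eq_vecI)
  fix i assume "i < dim_vec (tensor_vec (A *\<^sub>v p) r)"
  then have i: "i < n * L" using A r by simp
  then have L: "L > 0" by (auto intro: Nat.gr0I)
  have row: "i div L < n" using i L by (simp add: div_less_iff_less_mult)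
  have "(kron A (1\<^sub>m L) *\<^sub>v tensor_vec p r) $ i
      = (\<Sum>j<n * L. kron A (1\<^sub>m L) $$ (i,j) * tensor_vec p r $ j)"
    using A i p r by (simp add: kron_def scalar_prod_def atLeast0LessThan)
  also have "\<dots> = (\<Sum>a<n. \<Sum>b<L. kron A (1\<^sub>m L) $$ (i, a * L + b) * tensor_vec p r $ (a * L + b))"
    by (rule sum_lessThan_mult_split)
  also have "\<dots> = (\<Sum>a<n. \<Sum>b<L. if b = i mod L then A $$ (i div L, a) * p $ a * r $ (i mod L) else 0)"
    using i A p r by (intro sum.cong) (auto simp: kron_def index_tensor_vec mult_add_lt_mult)
  also have "\<dots> = tensor_vec (A *\<^sub>v p) r $ i"
    using i row L A p r by (simp add: sum.delta sum_distrib_right index_tensor_vec scalar_prod_def atLeast0LessThan)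
  finally show "(kron A (1\<^sub>m L) *\<^sub>v tensor_vec p r) $ i = tensor_vec (A *\<^sub>v p) r $ i" .
qed (use A p r in \<open>simp add: kron_def\<close>)

lemma mod_mult_eq_iff:
  assumes "(L::nat) > 0"
  shows "i mod (N * L) = j mod (N * L) \<longleftrightarrow> i div L mod N = j div L mod N \<and> i mod L = j mod L"
proof -
  have i: "i mod (N * L) = L * (i div L mod N) + i mod L" and j: "j mod (N * L) = L * (j div L mod N) + j mod L"
    by (simp_all add: mod_mult2_eq mult.commute[of N])
  have lt: "i mod L < L" "j mod L < L" using assms by auto
  show ?thesis
  proof
    assume "i mod (N * L) = j mod (N * L)"
    then have "L * (i div L mod N) + i mod L = L * (j div L mod N) + j mod L" unfolding i j .
    then have "(L * (i div L mod N) + i mod L) div L = (L * (j div L mod N) + j mod L) div L"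
      "(L * (i div L mod N) + i mod L) mod L = (L * (j div L mod N) + j mod L) mod L" by simp_all
    then show "i div L mod N = j div L mod N \<and> i mod L = j mod L" using lt assms by simp
  qed (simp add: i j)
qed

lemma kron_kron_one:
  assumes U: "U \<in> carrier_mat N N" and L: "L > 0"
  shows "kron U (1\<^sub>m (N * L)) = kron (kron U (1\<^sub>m N)) (1\<^sub>m L)"
proof (rule eq_matI)
  fix i j assume "i < dim_row (kron (kron U (1\<^sub>m N)) (1\<^sub>m L))" "j < dim_col (kron (kron U (1\<^sub>m N)) (1\<^sub>m L))"
  then have ij: "i < N * (N * L)" "j < N * (N * L)" using U by (auto simp: kron_def mult.assoc)
  then have N: "N > 0" by (auto intro: Nat.gr0I)
  have "i div L < N * N" "j div L < N * N" using ij L by (auto simp: div_less_iff_less_mult mult.assoc)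
  moreover have "i div L div N = i div (N * L)" "j div L div N = j div (N * L)"
    by (simp_all add: div_mult2_eq mult.commute[of N])
  ultimately show "kron U (1\<^sub>m (N * L)) $$ (i,j) = kron (kron U (1\<^sub>m N)) (1\<^sub>m L) $$ (i,j)"
    using ij U N L mod_mult_eq_iff[OF L, of i N j] by (auto simp: kron_def mult.assoc)
qed (use U in \<open>auto simp: kron_def mult.assoc\<close>)

definition perm_mat :: "nat \<Rightarrow> (nat \<Rightarrow> nat) \<Rightarrow> complex mat" where
  "perm_mat n f = Matrix.mat n n (\<lambda>(i,j). if j = f i then 1 else 0)"

lemma perm_mat_mult_vec:
  assumes f: "\<And>i. i < n \<Longrightarrow> f i < n" and v: "dim_vec v = n"
  shows "perm_mat n f *\<^sub>v v = Matrix.vec n (\<lambda>i. v $ f i)"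
proof (rule eq_vecI)
  fix i assume "i < dim_vec (Matrix.vec n (\<lambda>i. v $ f i))"
  then have i: "i < n" by simp
  have "(perm_mat n f *\<^sub>v v) $ i = (\<Sum>j<n. (if j = f i then 1 else 0) * v $ j)"
    using i v by (simp add: perm_mat_def scalar_prod_def atLeast0LessThan)
  also have "\<dots> = (\<Sum>j<n. if j = f i then v $ j else 0)" by (intro sum.cong) auto
  finally show "(perm_mat n f *\<^sub>v v) $ i = Matrix.vec n (\<lambda>i. v $ f i) $ i" using i f[OF i] by simp
qed (simp add: perm_mat_def)

lemma unitary_perm_mat:
  assumes "bij_betw f {..<n} {..<n}"
  shows "unitary_mat n (perm_mat n f)"
proof -
  have P: "perm_mat n f \<in> carrier_mat n n" and aP: "adj (perm_mat n f) \<in> carrier_mat n n"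
    by (simp_all add: perm_mat_def adj_def)
  have f: "f i < n" if "i < n" for i using assms that unfolding bij_betw_def by auto
  have inj: "f i = f j \<longleftrightarrow> i = j" if "i < n" "j < n" for i j
    using assms that unfolding bij_betw_def inj_on_def by auto
  have cnj_delta: "cnj (if P then 1 else 0) = (if P then 1 else 0)" for P by simp
  have "perm_mat n f * adj (perm_mat n f) = 1\<^sub>m n"
  proof (rule eq_matI)
    fix i j assume "i < dim_row (1\<^sub>m n)" "j < dim_col (1\<^sub>m n)"
    then have ij: "i < n" "j < n" by auto
    have "(perm_mat n f * adj (perm_mat n f)) $$ (i,j)
        = (\<Sum>r<n. (if r = f i then 1 else 0) * (if r = f j then 1 else 0))"
      using ij by (simp add: perm_mat_def adj_def scalar_prod_def atLeast0LessThan cnj_delta)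
    also have "\<dots> = (\<Sum>r<n. if r = f i then (if f i = f j then 1 else 0) else 0)"
      by (intro sum.cong) auto
    finally show "(perm_mat n f * adj (perm_mat n f)) $$ (i,j) = 1\<^sub>m n $$ (i,j)" using ij f inj by simp
  qed (simp_all add: perm_mat_def adj_def)
  moreover then have "adj (perm_mat n f) * perm_mat n f = 1\<^sub>m n"
    using mat_mult_left_right_inverse[OF P aP] by blast
  ultimately show ?thesis unfolding unitary_mat_def using P by blast
qed

text \<open>On indices \<open>i = a q + b\<close> of \<open>\<complex>\<^sup>p \<otimes> \<complex>\<^sup>q\<close> with \<open>a < p\<close>, \<open>b < q\<close>, \<open>swap_index q p\<close> maps
  \<open>b p + a\<close> to \<open>a q + b\<close>, so its permutation matrix swaps the two tensor factors.\<close>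

definition swap_index :: "nat \<Rightarrow> nat \<Rightarrow> nat \<Rightarrow> nat" where
  "swap_index p q i = (i mod p) * q + i div p"

lemma swap_index_lt: "i < p * q \<Longrightarrow> swap_index p q i < p * q"
  unfolding swap_index_def by (intro mult_add_lt_mult mod_div_lt_of_lt_mult)

lemma swap_index_inverse: "i < p * q \<Longrightarrow> swap_index q p (swap_index p q i) = i"
proof -
  assume i: "i < p * q"
  then have "i div p < q" by (rule mod_div_lt_of_lt_mult)
  then show ?thesis unfolding swap_index_def by simp
qed

lemma bij_swap_index: "bij_betw (swap_index p q) {..<p * q} {..<p * q}"
proof (rule bij_betw_byWitness[where f' = "swap_index q p"])
  show "\<forall>a\<in>{..<p * q}. swap_index q p (swap_index p q a) = a" using swap_index_inverse by auto
  show "\<forall>a\<in>{..<p * q}. swap_index p q (swap_index q p a) = a"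
    using swap_index_inverse[of _ q p] by (auto simp: mult.commute)
  show "swap_index p q ` {..<p * q} \<subseteq> {..<p * q}" using swap_index_lt by auto
  show "swap_index q p ` {..<p * q} \<subseteq> {..<p * q}" using swap_index_lt[of _ q p] by (auto simp: mult.commute)
qed

lemma perm_mat_swap_index_tensor_vec:
  assumes a: "dim_vec a = p" and b: "dim_vec b = q"
  shows "perm_mat (p * q) (swap_index p q) *\<^sub>v tensor_vec a b = tensor_vec b a"
proof -
  have "perm_mat (p * q) (swap_index p q) *\<^sub>v tensor_vec a b
      = Matrix.vec (p * q) (\<lambda>i. tensor_vec a b $ swap_index p q i)"
    using swap_index_lt a b by (intro perm_mat_mult_vec) auto
  also have "\<dots> = tensor_vec b a"
  proof (rule eq_vecI)
    fix i assume "i < dim_vec (tensor_vec b a)"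
    then have i: "i < p * q" using a b by (simp add: mult.commute)
    then have "i mod p < p" "i div p < q" by (rule mod_div_lt_of_lt_mult)+
    then show "Matrix.vec (p * q) (\<lambda>i. tensor_vec a b $ swap_index p q i) $ i = tensor_vec b a $ i"
      using i a b index_tensor_vec_pair[of "i mod p" a "i div p" b]
      by (simp add: swap_index_def index_tensor_vec mult.commute)
  qed (use a b in auto)
  finally show ?thesis .
qed

text \<open>\<open>lift_index f L\<close> applies the index permutation \<open>f\<close> to the first factor of \<open>\<complex>\<^sup>n \<otimes> \<complex>\<^sup>L\<close>.\<close>

definition lift_index :: "(nat \<Rightarrow> nat) \<Rightarrow> nat \<Rightarrow> nat \<Rightarrow> nat" where
  "lift_index f L i = f (i div L) * L + i mod L"

lemma lift_index_lt:
  assumes f: "\<And>x. x < n \<Longrightarrow> f x < n" and i: "i < n * L"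
  shows "lift_index f L i < n * L"
proof -
  have "i mod L < L" "i div L < n" using mod_div_lt_of_lt_mult[of i L n] i by (simp_all add: mult.commute)
  then show ?thesis unfolding lift_index_def using f by (intro mult_add_lt_mult) auto
qed

lemma lift_index_inverse:
  assumes "i < n * L" "\<And>x. x < n \<Longrightarrow> g (f x) = x" "\<And>x. x < n \<Longrightarrow> f x < n"
  shows "lift_index g L (lift_index f L i) = i"
proof -
  have "i mod L < L" "i div L < n" using mod_div_lt_of_lt_mult[of i L n] assms(1) by (simp_all add: mult.commute)
  then show ?thesis unfolding lift_index_def using assms by simp
qed

lemma bij_lift_index:
  assumes bij: "bij_betw f {..<n} {..<n}"
  shows "bij_betw (lift_index f L) {..<n * L} {..<n * L}"
proof -
  define g where "g = inv_into {..<n} f"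
  have f: "\<And>x. x < n \<Longrightarrow> f x < n" "\<And>x. x < n \<Longrightarrow> g (f x) = x"
    using bij unfolding g_def bij_betw_def by (auto simp: inv_into_f_f)
  have g: "\<And>x. x < n \<Longrightarrow> g x < n" "\<And>x. x < n \<Longrightarrow> f (g x) = x"
    using bij_betw_inv_into[OF bij] bij unfolding g_def bij_betw_def
    by (auto simp: f_inv_into_f)
  show ?thesis
  proof (rule bij_betw_byWitness[where f' = "lift_index g L"])
    show "\<forall>a\<in>{..<n * L}. lift_index g L (lift_index f L a) = a" using lift_index_inverse f by auto
    show "\<forall>a\<in>{..<n * L}. lift_index f L (lift_index g L a) = a" using lift_index_inverse g by auto
    show "lift_index f L ` {..<n * L} \<subseteq> {..<n * L}" using lift_index_lt[OF f(1)] by auto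
    show "lift_index g L ` {..<n * L} \<subseteq> {..<n * L}" using lift_index_lt[OF g(1)] by auto
  qed
qed

lemma perm_mat_lift_index_tensor_vec:
  assumes f: "\<And>x. x < n \<Longrightarrow> f x < n" and p: "dim_vec p = n" and r: "dim_vec r = L"
  shows "perm_mat (n * L) (lift_index f L) *\<^sub>v tensor_vec p r = tensor_vec (perm_mat n f *\<^sub>v p) r"
proof -
  have "perm_mat (n * L) (lift_index f L) *\<^sub>v tensor_vec p r
      = Matrix.vec (n * L) (\<lambda>i. tensor_vec p r $ lift_index f L i)"
    using lift_index_lt[OF f] p r by (intro perm_mat_mult_vec) auto
  also have "\<dots> = tensor_vec (perm_mat n f *\<^sub>v p) r"
  proof (rule eq_vecI)
    fix i assume "i < dim_vec (tensor_vec (perm_mat n f *\<^sub>v p) r)"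
    then have i: "i < n * L" using p r by (simp add: perm_mat_def)
    then have "i mod L < L" "i div L < n" using mod_div_lt_of_lt_mult[of i L n] by (simp_all add: mult.commute)
    then show "Matrix.vec (n * L) (\<lambda>i. tensor_vec p r $ lift_index f L i) $ i = tensor_vec (perm_mat n f *\<^sub>v p) r $ i"
      using i p r f index_tensor_vec_pair[of "f (i div L)" p "i mod L" r] perm_mat_mult_vec[OF f p]
      by (simp add: lift_index_def index_tensor_vec perm_mat_def)
  qed (use p r in \<open>auto simp: perm_mat_def\<close>)
  finally show ?thesis .
qed

definition inner_vec :: "complex Matrix.vec \<Rightarrow> complex Matrix.vec \<Rightarrow> complex" where
  "inner_vec a b = (\<Sum>i<dim_vec a. cnj (a $ i) * b $ i)"

lemma inner_vec_self: "inner_vec v v = complex_of_real (vnorm2 v)"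
  unfolding inner_vec_def vnorm2_def by (simp add: complex_norm_square[simplified] mult.commute)

lemma inner_vec_tensor_vec:
  assumes "dim_vec a = dim_vec c" "dim_vec b = dim_vec d"
  shows "inner_vec (tensor_vec a b) (tensor_vec c d) = inner_vec a c * inner_vec b d"
proof -
  have "inner_vec (tensor_vec a b) (tensor_vec c d) = (\<Sum>x<dim_vec a. \<Sum>y<dim_vec b.
      cnj (tensor_vec a b $ (x * dim_vec b + y)) * tensor_vec c d $ (x * dim_vec b + y))"
    unfolding inner_vec_def dim_tensor_vec by (rule sum_lessThan_mult_split)
  also have "\<dots> = (\<Sum>x<dim_vec a. \<Sum>y<dim_vec b. (cnj (a $ x) * c $ x) * (cnj (b $ y) * d $ y))"
  proof (intro sum.cong refl)
    fix x y assume "x \<in> {..<dim_vec a}" "y \<in> {..<dim_vec b}"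
    then show "cnj (tensor_vec a b $ (x * dim_vec b + y)) * tensor_vec c d $ (x * dim_vec b + y)
        = (cnj (a $ x) * c $ x) * (cnj (b $ y) * d $ y)"
      using assms index_tensor_vec_pair[of x a y b] index_tensor_vec_pair[of x c y d] by simp
  qed
  also have "\<dots> = inner_vec a c * inner_vec b d" unfolding inner_vec_def by (simp add: sum_product)
  finally show ?thesis .
qed

lemma vnorm2_tensor_vec: "vnorm2 (tensor_vec a b) = vnorm2 a * vnorm2 b"
  using inner_vec_tensor_vec[of a a b b] by (simp add: inner_vec_self flip: of_real_mult)

lemma vnorm2_unit_vec:
  assumes "i < n"
  shows "vnorm2 (unit_vec n i) = 1"
proof -
  have "vnorm2 (unit_vec n i) = (\<Sum>j<n. if j = i then 1 else 0)"
    unfolding vnorm2_def using assms by (intro sum.cong) auto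
  then show ?thesis using assms by simp
qed

lemma inner_vec_unit_vec: "i < n \<Longrightarrow> inner_vec (unit_vec n i) (unit_vec n i) = 1"
  by (simp add: inner_vec_self vnorm2_unit_vec)

fun tensor_pow :: "complex Matrix.vec \<Rightarrow> nat \<Rightarrow> complex Matrix.vec" where
  "tensor_pow v 0 = unit_vec 1 0"
| "tensor_pow v (Suc j) = tensor_vec v (tensor_pow v j)"

lemma dim_tensor_pow [simp]: "dim_vec (tensor_pow v j) = dim_vec v ^ j"
  by (induction j) auto

lemma tensor_pow_Suc_right: "tensor_pow v (Suc j) = tensor_vec (tensor_pow v j) v"
proof (induction j)
  case 0 then show ?case by simp
next
  case (Suc j)
  then show ?case by (metis tensor_pow.simps(2) tensor_vec_assoc)
qed

lemma inner_vec_tensor_pow: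
  "dim_vec a = dim_vec b \<Longrightarrow> inner_vec (tensor_pow a j) (tensor_pow b j) = (inner_vec a b) ^ j"
  by (induction j) (auto simp: inner_vec_unit_vec inner_vec_tensor_vec)

lemma vnorm2_tensor_pow: "vnorm2 v = 1 \<Longrightarrow> vnorm2 (tensor_pow v j) = 1"
  by (induction j) (auto simp: vnorm2_unit_vec vnorm2_tensor_vec)

definition proj_mat :: "complex Matrix.vec \<Rightarrow> complex mat" where
  "proj_mat x = Matrix.mat (dim_vec x) (dim_vec x) (\<lambda>(i,j). x $ i * cnj (x $ j))"

lemma proj_mat_mult_vec:
  assumes "dim_vec v = dim_vec x"
  shows "proj_mat x *\<^sub>v v = inner_vec x v \<cdot>\<^sub>v x"
proof (rule eq_vecI)
  fix i assume "i < dim_vec (inner_vec x v \<cdot>\<^sub>v x)"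
  then have i: "i < dim_vec x" by simp
  have "(proj_mat x *\<^sub>v v) $ i = (\<Sum>j<dim_vec x. x $ i * cnj (x $ j) * v $ j)"
    using i assms by (simp add: proj_mat_def scalar_prod_def atLeast0LessThan)
  also have "\<dots> = inner_vec x v * x $ i" unfolding inner_vec_def using assms
    by (simp add: sum_distrib_left sum_distrib_right algebra_simps)
  finally show "(proj_mat x *\<^sub>v v) $ i = (inner_vec x v \<cdot>\<^sub>v x) $ i" using i by simp
qed (simp add: proj_mat_def)

lemma vnorm2_proj_mat_mult_vec:
  assumes "dim_vec v = dim_vec x"
  shows "vnorm2 (proj_mat x *\<^sub>v v) = (cmod (inner_vec x v))\<^sup>2 * vnorm2 x"
  unfolding proj_mat_mult_vec[OF assms] vnorm2_def
  by (simp add: norm_mult power_mult_distrib sum_distrib_left)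

lemma proj_mat_idem:
  assumes "vnorm2 x = 1"
  shows "proj_mat x * proj_mat x = proj_mat x"
proof (rule eq_matI)
  fix i j assume "i < dim_row (proj_mat x)" "j < dim_col (proj_mat x)"
  then have ij: "i < dim_vec x" "j < dim_vec x" by (auto simp: proj_mat_def)
  have "(proj_mat x * proj_mat x) $$ (i,j) = (\<Sum>r<dim_vec x. x $ i * cnj (x $ r) * (x $ r * cnj (x $ j)))"
    using ij by (simp add: proj_mat_def scalar_prod_def atLeast0LessThan)
  also have "\<dots> = x $ i * cnj (x $ j) * inner_vec x x"
    unfolding inner_vec_def by (simp add: sum_distrib_left algebra_simps)
  also have "\<dots> = proj_mat x $$ (i,j)" using ij assms by (simp add: inner_vec_self proj_mat_def)
  finally show "(proj_mat x * proj_mat x) $$ (i,j) = proj_mat x $$ (i,j)" .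
qed (auto simp: proj_mat_def)

lemma adj_proj_mat: "adj (proj_mat x) = proj_mat x"
  by (rule eq_matI) (auto simp: proj_mat_def adj_def)

section \<open>The tester\<close>

definition max_entangled :: "nat \<Rightarrow> complex Matrix.vec" where
  "max_entangled N = Matrix.vec (N * N)
     (\<lambda>x. if x div N = x mod N then complex_of_real (1 / sqrt (real N)) else 0)"

lemma dim_max_entangled [simp]: "dim_vec (max_entangled N) = N * N"
  unfolding max_entangled_def by simp

lemma index_max_entangled:
  "a < N \<Longrightarrow> c < N \<Longrightarrow> max_entangled N $ (a * N + c) = (if a = c then complex_of_real (1 / sqrt (real N)) else 0)"
  unfolding max_entangled_def using mult_add_lt_mult[of a N c N] by simp

lemma vnorm2_max_entangled:
  assumes "N > 0"
  shows "vnorm2 (max_entangled N) = 1"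
proof -
  have "vnorm2 (max_entangled N) = (\<Sum>a<N. \<Sum>c<N. (cmod (max_entangled N $ (a * N + c)))\<^sup>2)"
    unfolding vnorm2_def dim_max_entangled by (rule sum_lessThan_mult_split)
  also have "\<dots> = (\<Sum>a<N. \<Sum>c<N. if c = a then 1 / real N else 0)"
    using assms by (intro sum.cong) (auto simp: index_max_entangled norm_divide power_divide)
  also have "\<dots> = 1" using assms by simp
  finally show ?thesis .
qed

lemma kron_one_mult_vec_index:
  assumes U: "U \<in> carrier_mat N N" and v: "dim_vec v = N * N" and x: "x < N * N"
  shows "(kron U (1\<^sub>m N) *\<^sub>v v) $ x = (\<Sum>a<N. U $$ (x div N, a) * v $ (a * N + x mod N))"
proof -
  have xd: "x mod N < N" "x div N < N" using mod_div_lt_of_lt_mult[OF x] by auto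
  have "(kron U (1\<^sub>m N) *\<^sub>v v) $ x = (\<Sum>j<N * N. kron U (1\<^sub>m N) $$ (x,j) * v $ j)"
    using U v x by (simp add: kron_def scalar_prod_def atLeast0LessThan)
  also have "\<dots> = (\<Sum>a<N. \<Sum>c<N. kron U (1\<^sub>m N) $$ (x, a * N + c) * v $ (a * N + c))"
    by (rule sum_lessThan_mult_split)
  also have "\<dots> = (\<Sum>a<N. \<Sum>c<N. if c = x mod N then U $$ (x div N, a) * v $ (a * N + x mod N) else 0)"
    using x U xd by (intro sum.cong) (auto simp: kron_def mult_add_lt_mult)
  also have "\<dots> = (\<Sum>a<N. U $$ (x div N, a) * v $ (a * N + x mod N))"
    using xd by simp
  finally show ?thesis .
qed

text \<open>Two queries on the halves of \<open>\<Phi>\<close>, with a swap in between: since \<open>\<Phi>\<close> is swap-invariant this is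
  \<open>SWAP (U \<otimes> U) \<Phi>\<close>, whose overlap with \<open>\<Phi>\<close> is \<open>tr (U U\<^sup>T) / N\<close>.\<close>

definition query_pair_state :: "complex mat \<Rightarrow> nat \<Rightarrow> complex Matrix.vec" where
  "query_pair_state U N =
     kron U (1\<^sub>m N) *\<^sub>v (perm_mat (N * N) (swap_index N N) *\<^sub>v (kron U (1\<^sub>m N) *\<^sub>v max_entangled N))"

lemma dim_query_pair_state [simp]: "U \<in> carrier_mat N N \<Longrightarrow> dim_vec (query_pair_state U N) = N * N"
  unfolding query_pair_state_def by (simp add: kron_def)

lemma index_query_pair_state:
  assumes U: "U \<in> carrier_mat N N" and x: "x < N * N"
  shows "query_pair_state U N $ x
    = complex_of_real (1 / sqrt (real N)) * (\<Sum>a<N. U $$ (x div N, a) * U $$ (x mod N, a))"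
proof -
  define c where "c = complex_of_real (1 / sqrt (real N))"
  define v1 where "v1 = kron U (1\<^sub>m N) *\<^sub>v max_entangled N"
  define v2 where "v2 = perm_mat (N * N) (swap_index N N) *\<^sub>v v1"
  have dv1: "dim_vec v1 = N * N" unfolding v1_def using U by (simp add: kron_def)
  have v1: "v1 $ y = c * U $$ (y div N, y mod N)" if y: "y < N * N" for y
  proof -
    have yd: "y mod N < N" "y div N < N" using mod_div_lt_of_lt_mult[OF y] by auto
    have "v1 $ y = (\<Sum>a<N. U $$ (y div N, a) * max_entangled N $ (a * N + y mod N))"
      unfolding v1_def using kron_one_mult_vec_index[OF U _ y] by simp
    also have "\<dots> = (\<Sum>a<N. if a = y mod N then c * U $$ (y div N, y mod N) else 0)"
      using yd by (intro sum.cong) (auto simp: index_max_entangled c_def)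
    finally show ?thesis using yd by simp
  qed
  have dv2: "dim_vec v2 = N * N" unfolding v2_def by (simp add: perm_mat_def)
  have v2: "v2 $ y = c * U $$ (y mod N, y div N)" if y: "y < N * N" for y
  proof -
    have "y mod N < N" "y div N < N" using mod_div_lt_of_lt_mult[OF y] by auto
    then have "swap_index N N y div N = y mod N" "swap_index N N y mod N = y div N"
      unfolding swap_index_def by auto
    then show ?thesis
      unfolding v2_def using y dv1 v1[OF swap_index_lt[OF y]] swap_index_lt
      by (simp add: perm_mat_mult_vec)
  qed
  have xd: "x mod N < N" "x div N < N" using mod_div_lt_of_lt_mult[OF x] by auto
  have "query_pair_state U N $ x = (\<Sum>a<N. U $$ (x div N, a) * v2 $ (a * N + x mod N))"
    unfolding query_pair_state_def v1_def[symmetric] v2_def[symmetric] using kron_one_mult_vec_index[OF U dv2 x] .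
  also have "\<dots> = (\<Sum>a<N. c * (U $$ (x div N, a) * U $$ (x mod N, a)))"
    using xd v2 mult_add_lt_mult[of _ N "x mod N" N] by (intro sum.cong) auto
  finally show ?thesis unfolding c_def by (simp add: sum_distrib_left)
qed

lemma inner_max_entangled_query_pair_state:
  assumes U: "U \<in> carrier_mat N N" and N: "N > 0"
  shows "inner_vec (max_entangled N) (query_pair_state U N) = mtrace (U * transpose_mat U) / of_nat N"
proof -
  define c where "c = complex_of_real (1 / sqrt (real N))"
  have cc: "cnj c * c = 1 / of_nat N" unfolding c_def using N by (simp flip: of_real_mult)
  have "inner_vec (max_entangled N) (query_pair_state U N)
      = (\<Sum>a<N. \<Sum>b<N. cnj (max_entangled N $ (a * N + b)) * query_pair_state U N $ (a * N + b))"
    unfolding inner_vec_def dim_max_entangled by (rule sum_lessThan_mult_split)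
  also have "\<dots> = (\<Sum>a<N. \<Sum>b<N. if b = a then cnj c * c * (\<Sum>i<N. U $$ (a,i) * U $$ (a,i)) else 0)"
    using U mult_add_lt_mult[of _ N _ N]
    by (intro sum.cong) (auto simp: index_max_entangled index_query_pair_state c_def)
  also have "\<dots> = cnj c * c * mtrace (U * transpose_mat U)"
    using U by (simp add: mtrace_mult_transpose[OF U] sum_distrib_left)
  finally show ?thesis using cc by simp
qed

text \<open>The test with \<open>k\<close> rounds works on \<open>\<Phi>\<^sup>\<otimes>\<^sup>k \<otimes> e\<^sub>0\<close>, \<open>e\<^sub>0 \<in> \<complex>\<^sup>N\<close>, the queried system being the first
  tensor factor. Round \<open>j\<close> queries the first half of the leading \<open>\<Phi>\<close>, swaps its two halves, queries
  again and rotates the block to the end, so that after all rounds the register holds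
  \<open>e\<^sub>0 \<otimes> w\<^sup>\<otimes>\<^sup>k\<close> with \<open>w = query_pair_state U N\<close>; the test accepts on \<open>e\<^sub>0 \<otimes> \<Phi>\<^sup>\<otimes>\<^sup>k\<close>.
  \<open>tail_dim N k\<close> is the dimension of the register after the leading \<open>\<Phi>\<close>.\<close>

definition tail_dim :: "nat \<Rightarrow> nat \<Rightarrow> nat" where
  "tail_dim N k = N * (N * N) ^ (k - 1)"

definition orth_test_ops :: "nat \<Rightarrow> nat \<Rightarrow> nat \<Rightarrow> complex mat" where
  "orth_test_ops N k t =
    (if t = 0 then 1\<^sub>m (N * (N * N) ^ k)
     else if odd t then perm_mat (N * N * tail_dim N k) (lift_index (swap_index N N) (tail_dim N k))
     else perm_mat (N * N * tail_dim N k) (swap_index (N * N) (tail_dim N k)))"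

definition orth_test :: "nat \<Rightarrow> nat \<Rightarrow> qalg" where
  "orth_test N k = \<lparr>nqueries = 2 * k, anc_dim = (N * N) ^ k,
     init_state = tensor_vec (tensor_pow (max_entangled N) k) (unit_vec N 0),
     ops = orth_test_ops N k,
     acc_proj = proj_mat (tensor_vec (unit_vec N 0) (tensor_pow (max_entangled N) k))\<rparr>"

lemma register_dim_eq_tail_dim: "k \<ge> 1 \<Longrightarrow> N * (N * N) ^ k = N * N * tail_dim N k"
  unfolding tail_dim_def by (cases k) (auto simp: algebra_simps)

lemma anc_dim_eq_tail_dim: "k \<ge> 1 \<Longrightarrow> (N * N) ^ k = N * tail_dim N k"
  unfolding tail_dim_def by (cases k) (auto simp: algebra_simps)

lemma dim_after_round: "j < k \<Longrightarrow> (N * N) ^ (k - Suc j) * (N * (N * N) ^ j) = tail_dim N k"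
proof -
  assume "j < k"
  then have "k - Suc j + j = k - 1" by simp
  then show ?thesis unfolding tail_dim_def by (metis mult.left_commute power_add)
qed

lemma run_state_orth_test:
  assumes U: "U \<in> carrier_mat N N" and N: "N > 0" and j: "j \<le> k"
  shows "run_state (orth_test N k) U (2 * j)
    = tensor_vec (tensor_pow (max_entangled N) (k - j)) (tensor_vec (unit_vec N 0) (tensor_pow (query_pair_state U N) j))"
  using j
proof (induction j)
  case 0
  have "dim_vec (tensor_vec (tensor_pow (max_entangled N) k) (unit_vec N 0)) = N * (N * N) ^ k"
    by (simp add: power_mult_distrib)
  then have "1\<^sub>m (N * (N * N) ^ k) *\<^sub>v tensor_vec (tensor_pow (max_entangled N) k) (unit_vec N 0)
      = tensor_vec (tensor_pow (max_entangled N) k) (unit_vec N 0)"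
    by (intro one_mult_mat_vec) (simp only: carrier_vec_def mem_Collect_eq)
  then show ?case by (simp add: orth_test_def orth_test_ops_def del: one_mult_mat_vec)
next
  case (Suc j)
  then have jk: "j < k" and k: "k \<ge> 1" by auto
  define q where "q = tail_dim N k"
  define w where "w = query_pair_state U N"
  define X where "X = tensor_vec (tensor_pow (max_entangled N) (k - Suc j)) (tensor_vec (unit_vec N 0) (tensor_pow w j))"
  define UI where "UI = kron U (1\<^sub>m N)"
  have UI: "UI \<in> carrier_mat (N * N) (N * N)" unfolding UI_def using U by (simp add: kron_def)
  have dw: "dim_vec w = N * N" unfolding w_def using U by simp
  have dX: "dim_vec X = q" unfolding X_def q_def using dim_after_round[OF jk, of N] dw by (simp add: power_mult_distrib)
  have "k - j = Suc (k - Suc j)" using jk by simp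
  then have st: "run_state (orth_test N k) U (2 * j) = tensor_vec (max_entangled N) X"
    using Suc.IH jk unfolding X_def w_def by (simp add: tensor_vec_assoc)
  have "q > 0" unfolding q_def tail_dim_def using N by simp
  then have query: "kron U (1\<^sub>m (anc_dim (orth_test N k))) *\<^sub>v tensor_vec v X = tensor_vec (UI *\<^sub>v v) X"
    if "dim_vec v = N * N" for v
    using kron_kron_one[OF U] kron_one_mult_tensor_vec[OF UI that dX] anc_dim_eq_tail_dim[OF k]
    unfolding UI_def q_def by (simp add: orth_test_def)
  have ops_odd: "ops (orth_test N k) (Suc (2 * j)) = perm_mat (N * N * q) (lift_index (swap_index N N) q)"
    and ops_even: "ops (orth_test N k) (Suc (Suc (2 * j))) = perm_mat (N * N * q) (swap_index (N * N) q)"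
    unfolding orth_test_def orth_test_ops_def q_def by simp_all
  have "run_state (orth_test N k) U (Suc (2 * j))
      = tensor_vec (perm_mat (N * N) (swap_index N N) *\<^sub>v (UI *\<^sub>v max_entangled N)) X"
    using st query[of "max_entangled N"] ops_odd UI swap_index_lt dX
    by (simp add: perm_mat_lift_index_tensor_vec)
  then have "run_state (orth_test N k) U (2 * Suc j) = perm_mat (N * N * q) (swap_index (N * N) q) *\<^sub>v tensor_vec w X"
    using query ops_even unfolding w_def query_pair_state_def UI_def by (simp add: perm_mat_def)
  also have "\<dots> = tensor_vec X w" using perm_mat_swap_index_tensor_vec[OF dw dX] .
  also have "\<dots> = tensor_vec (tensor_pow (max_entangled N) (k - Suc j))
      (tensor_vec (unit_vec N 0) (tensor_pow w (Suc j)))"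
    unfolding X_def tensor_pow_Suc_right by (simp add: tensor_vec_assoc)
  finally show ?case unfolding w_def .
qed

lemma accept_prob_orth_test:
  assumes U: "U \<in> carrier_mat N N" and N: "N > 0"
  shows "accept_prob (orth_test N k) U = (cmod (mtrace (U * transpose_mat U)) / real N) ^ (2 * k)"
proof -
  define w where "w = query_pair_state U N"
  define target where "target = tensor_vec (unit_vec N 0) (tensor_pow (max_entangled N) k)"
  have dw: "dim_vec w = N * N" unfolding w_def using U by simp
  have final: "run_state (orth_test N k) U (nqueries (orth_test N k)) = tensor_vec (unit_vec N 0) (tensor_pow w k)"
    using run_state_orth_test[OF U N, of k k] unfolding w_def by (simp add: orth_test_def)
  have "vnorm2 target = 1" unfolding target_def
    using N by (simp add: vnorm2_tensor_vec vnorm2_unit_vec vnorm2_tensor_pow vnorm2_max_entangled)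
  moreover have "inner_vec target (tensor_vec (unit_vec N 0) (tensor_pow w k)) = (inner_vec (max_entangled N) w) ^ k"
    unfolding target_def using dw N by (simp add: inner_vec_tensor_vec inner_vec_unit_vec inner_vec_tensor_pow)
  moreover have "dim_vec (tensor_vec (unit_vec N 0) (tensor_pow w k)) = dim_vec target"
    unfolding target_def using dw by simp
  ultimately have "accept_prob (orth_test N k) U = (cmod (inner_vec (max_entangled N) w)) ^ (2 * k)"
    unfolding accept_prob_def final
    by (simp add: orth_test_def target_def[symmetric] vnorm2_proj_mat_mult_vec norm_power
        power_mult[symmetric] mult.commute)
  then show ?thesis
    unfolding w_def inner_max_entangled_query_pair_state[OF U N] by (simp add: norm_divide)
qed

lemma unitary_one_mat: "unitary_mat n (1\<^sub>m n)"
proof -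
  have "adj (1\<^sub>m n) = (1\<^sub>m n :: complex mat)" by (rule eq_matI) (auto simp: adj_def)
  then show ?thesis unfolding unitary_mat_def by simp
qed

lemma valid_qalg_orth_test:
  assumes N: "N > 0"
  shows "valid_qalg N (orth_test N k)"
proof -
  define target where "target = tensor_vec (unit_vec N 0) (tensor_pow (max_entangled N) k)"
  have ops: "unitary_mat (N * (N * N) ^ k) (orth_test_ops N k t)" if "t \<le> 2 * k" for t
  proof (cases "t = 0")
    case False
    then have k: "k \<ge> 1" using that by simp
    have "unitary_mat (N * N * tail_dim N k) (perm_mat (N * N * tail_dim N k) (lift_index (swap_index N N) (tail_dim N k)))"
      by (intro unitary_perm_mat bij_lift_index bij_swap_index)
    moreover have "unitary_mat (N * N * tail_dim N k) (perm_mat (N * N * tail_dim N k) (swap_index (N * N) (tail_dim N k)))"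
      by (intro unitary_perm_mat bij_swap_index)
    ultimately show ?thesis unfolding orth_test_ops_def register_dim_eq_tail_dim[OF k] using False by simp
  qed (simp add: orth_test_ops_def unitary_one_mat)
  have norm: "vnorm2 target = 1" "vnorm2 (tensor_vec (tensor_pow (max_entangled N) k) (unit_vec N 0)) = 1"
    unfolding target_def using N
    by (simp_all add: vnorm2_tensor_vec vnorm2_unit_vec vnorm2_tensor_pow vnorm2_max_entangled)
  have dims: "dim_vec target = N * (N * N) ^ k"
    "dim_vec (tensor_vec (tensor_pow (max_entangled N) k) (unit_vec N 0)) = N * (N * N) ^ k"
    unfolding target_def by (simp_all add: power_mult_distrib)
  have "proj_mat target \<in> carrier_mat (N * (N * N) ^ k) (N * (N * N) ^ k)"
    using dims by (simp add: proj_mat_def)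
  moreover have "N * anc_dim (orth_test N k) = N * (N * N) ^ k" by (simp add: orth_test_def)
  ultimately show ?thesis unfolding valid_qalg_def
  proof (intro conjI allI impI)
    show "1 \<le> anc_dim (orth_test N k)" using N by (simp add: orth_test_def)
    show "init_state (orth_test N k) \<in> carrier_vec (N * anc_dim (orth_test N k))"
      using dims(2) \<open>N * anc_dim (orth_test N k) = N * (N * N) ^ k\<close>
      by (simp only: orth_test_def qalg.simps carrier_vec_def mem_Collect_eq)
    show "vnorm2 (init_state (orth_test N k)) = 1" using norm(2) by (simp add: orth_test_def)
    show "unitary_mat (N * anc_dim (orth_test N k)) (ops (orth_test N k) t)"
      if "t \<le> nqueries (orth_test N k)" for t
      using ops[of t] that \<open>N * anc_dim (orth_test N k) = N * (N * N) ^ k\<close> by (simp add: orth_test_def)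
    show "acc_proj (orth_test N k) * acc_proj (orth_test N k) = acc_proj (orth_test N k)"
      using proj_mat_idem[OF norm(1)] by (simp add: orth_test_def target_def)
    show "adj (acc_proj (orth_test N k)) = acc_proj (orth_test N k)"
      by (simp add: orth_test_def adj_proj_mat)
  qed (simp add: orth_test_def target_def)
qed

lemma power_le_one_third:
  fixes x e :: real
  assumes x: "0 \<le> x" "x \<le> 1 - 2 * e\<^sup>2" and k: "1 \<le> real k * e\<^sup>2"
  shows "x ^ (2 * k) \<le> 1/3"
proof -
  have "x ^ (2 * k) \<le> (1 - 2 * e\<^sup>2) ^ (2 * k)" using x by (intro power_mono) auto
  also have "\<dots> \<le> (exp (- 2 * e\<^sup>2)) ^ (2 * k)"
    using x exp_ge_add_one_self[of "- 2 * e\<^sup>2"] by (intro power_mono) auto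
  also have "\<dots> = exp (- 4 * (real k * e\<^sup>2))" by (simp flip: exp_of_nat_mult)
  also have "\<dots> \<le> exp (- 4)" using k by simp
  also have "\<dots> \<le> 1/3"
    using exp_ge_add_one_self[of 4] by (simp add: exp_minus field_simps)
  finally show ?thesis .
qed

text \<open>For \<open>\<epsilon>\<^sup>2 > 1/2\<close> no unitary is \<open>\<epsilon>\<close>-far from \<open>\<O>\<^sub>N\<close>, so no query is needed.\<close>

definition rounds :: "real \<Rightarrow> nat" where
  "rounds \<epsilon> = (if \<epsilon>\<^sup>2 > 1/2 then 0 else nat \<lceil>1 / \<epsilon>\<^sup>2\<rceil>)"

lemma rounds_ge:
  assumes "\<epsilon> > 0" "\<epsilon>\<^sup>2 \<le> 1/2"
  shows "1 \<le> real (rounds \<epsilon>) * \<epsilon>\<^sup>2"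
proof -
  have "1 / \<epsilon>\<^sup>2 \<le> real (rounds \<epsilon>)" using assms unfolding rounds_def by simp
  then show ?thesis using assms by (simp add: field_simps)
qed

lemma rounds_le:
  assumes "\<epsilon> > 0"
  shows "real (2 * rounds \<epsilon>) \<le> 3 / \<epsilon>\<^sup>2"
proof (cases "\<epsilon>\<^sup>2 > 1/2")
  case False
  then have inv: "2 \<le> 1 / \<epsilon>\<^sup>2" using assms by (simp add: field_simps)
  have "real (rounds \<epsilon>) \<le> 1 / \<epsilon>\<^sup>2 + 1" using False inv unfolding rounds_def by simp
  then have "real (2 * rounds \<epsilon>) \<le> 2 * (1 / \<epsilon>\<^sup>2 + 1)" by simp
  also have "\<dots> \<le> 3 / \<epsilon>\<^sup>2" using inv by (simp add: field_simps)
  finally show ?thesis .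
qed (simp add: rounds_def)

lemma orth_test_eps_tests:
  assumes N: "N > 0" and \<epsilon>: "\<epsilon> > 0"
  shows "eps_tests N \<epsilon> (orth_group N) (orth_test N (rounds \<epsilon>))"
  unfolding eps_tests_def
proof (intro conjI allI impI valid_qalg_orth_test[OF N])
  fix U assume U: "unitary_mat N U"
  then have Uc: "U \<in> carrier_mat N N" unfolding unitary_mat_def by simp
  define x where "x = cmod (mtrace (U * transpose_mat U)) / real N"
  have acc: "accept_prob (orth_test N (rounds \<epsilon>)) U = x ^ (2 * rounds \<epsilon>)"
    unfolding x_def using accept_prob_orth_test[OF Uc N] .
  show "accept_prob (orth_test N (rounds \<epsilon>)) U \<ge> 2/3" if "has_property N (orth_group N) U"
    using has_property_orth_group_trace[OF that] N unfolding acc x_def by simp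
  show "accept_prob (orth_test N (rounds \<epsilon>)) U \<le> 1/3" if "eps_far N \<epsilon> (orth_group N) U"
  proof -
    have "x \<le> 1 - 2 * \<epsilon>\<^sup>2"
      using eps_far_orth_group_trace_bound[OF U that N] \<epsilon> N unfolding x_def by (simp add: divide_le_eq mult.commute)
    moreover have "0 \<le> x" unfolding x_def by simp
    ultimately have "1 \<le> real (rounds \<epsilon>) * \<epsilon>\<^sup>2" using rounds_ge[OF \<epsilon>] by simp
    then show ?thesis unfolding acc using \<open>0 \<le> x\<close> \<open>x \<le> 1 - 2 * \<epsilon>\<^sup>2\<close> by (intro power_le_one_third)
  qed
qed

theorem theorem1:
  shows "\<exists>c::real. \<forall>n::nat. n \<ge> 1 \<longrightarrow> (\<forall>\<epsilon>::real. \<epsilon> > 0 \<longrightarrow>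
           (\<exists>A. eps_tests (2^n) \<epsilon> (orth_group (2^n)) A \<and> real (nqueries A) \<le> c / \<epsilon>\<^sup>2))"
proof (intro exI[of _ 3] allI impI)
  fix n :: nat and \<epsilon> :: real
  assume "\<epsilon> > 0"
  then show "\<exists>A. eps_tests (2^n) \<epsilon> (orth_group (2^n)) A \<and> real (nqueries A) \<le> 3 / \<epsilon>\<^sup>2"
    using orth_test_eps_tests[of "2^n" \<epsilon>] rounds_le[of \<epsilon>] by (auto simp: orth_test_def)
qed

end
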